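(* Let $n\ge3$ and suppose $T=T_\lambda(r,m)$ acts linearly and inner faithfully on $\Bbbk\overline{Q}$ so that $g$ acts by a reflection: $g\cdot e_i=e_{n-(d+i)}$, $g\cdot a_i=\mu_ia^*_{n-(d+i+1)}$, $g\cdot a_i^*=\mu_i^*a_{n-(d+i+1)}$ for some integer $0<d\le n-1$ and $\mu_i,\mu_i^*\in\Bbbk^\times$, and that this action descends to an action on $\Pi_Q$. Then $r=2$ and $\mu_i\mu_i^*=1$ for all $i$.
   Context: Let $\Bbbk$ be a field, $r>1$ and $m$ positive integers with $r\mid m$, and $\lambda\in\Bbbk$ a primitive $r$-th root of unity, with $r$ coprime to the characteristic of $\Bbbk$. The generalized Taft algebra $T=T_\lambda(r,m)$ is the Hopf algebra generated by $g,x$ with relations $gx=\lambda xg$, $g^m=1$, $x^r=0$, $\Delta(g)=g\otimes g$, $\Delta(x)=1\otimes x+x\otimes g$, $\varepsilon(g)=1,\varepsilon(x)=0$, $S(g)=g^{-1}$, $S(x)=-xg^{-1}$. An action of $T$ on an algebra $A$ is a $T$-module algebra structure; so $g$ acts by an algebra automorphism and $x\cdot(ab)=a(x\cdot b)+(x\cdot a)(g\cdot b)$. It is inner faithful if no nonzero Hopf ideal $I$ of $T$ satisfies $I\cdot A=0$. Vertex indices are taken modulo $n$. $\overline{Q}$ has vertices $0,\dots,n-1$ and arrows $a_i:i\to i+1$, $a_i^*:i+1\to i$; in $\Bbbk\overline{Q}$, $e_i$ is the trivial path at $i$ and $pq$ is concatenation ($p$ then $q$) if the target of $p$ is the source of $q$,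 else $0$. $\Pi_Q=\Bbbk\overline{Q}/(\Omega)$, $(\Omega)$ the ideal generated by $a_i^*a_i-a_{i+1}a_{i+1}^*$; the action descends to $\Pi_Q$ if $(\Omega)$ is stable under $g$ and $x$. A linear action: $g$ acts by a path-length-preserving automorphism and $x$ maps vertices into the span of vertices and arrows into the span of vertices and arrows. *)

theory Defs
  imports Main
begin

text \<open>Vertices 0..n-1 (indices mod n).  Fw i is the arrow a_i : i -> i+1,
  Bw i is the arrow a_i^* : i+1 -> i.\<close>
datatype arrow = Fw nat | Bw nat

type_synonym path = "nat \<times> arrow list"   \<comment> \<open>start vertex and arrow list (left to right)\<close>
type_synonym 'k pel = "path \<Rightarrow> 'k"     \<comment> \<open>coefficient functions: elements of k Qbar\<close>

fun asrc :: "nat \<Rightarrow> arrow \<Rightarrow> nat" where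
  "asrc n (Fw i) = i"
| "asrc n (Bw i) = Suc i mod n"

fun atgt :: "nat \<Rightarrow> arrow \<Rightarrow> nat" where
  "atgt n (Fw i) = Suc i mod n"
| "atgt n (Bw i) = i"

fun aidx :: "arrow \<Rightarrow> nat" where
  "aidx (Fw i) = i"
| "aidx (Bw i) = i"

fun walk_ok :: "nat \<Rightarrow> nat \<Rightarrow> arrow list \<Rightarrow> bool" where
  "walk_ok n v [] = True"
| "walk_ok n v (a # as) = (asrc n a = v \<and> walk_ok n (atgt n a) as)"

fun walk_end :: "nat \<Rightarrow> nat \<Rightarrow> arrow list \<Rightarrow> nat" where
  "walk_end n v [] = v"
| "walk_end n v (a # as) = walk_end n (atgt n a) as"

definition valid_path :: "nat \<Rightarrow> path \<Rightarrow> bool" where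
  "valid_path n p \<longleftrightarrow> fst p < n \<and> (\<forall>a\<in>set (snd p). aidx a < n) \<and> walk_ok n (fst p) (snd p)"

definition path_alg :: "nat \<Rightarrow> ('k::field) pel set" where
  "path_alg n = {f. finite {p. f p \<noteq> 0} \<and> (\<forall>p. f p \<noteq> 0 \<longrightarrow> valid_path n p)}"

text \<open>Multiplication = bilinear extension of concatenation (p then q).\<close>
definition pmult :: "nat \<Rightarrow> ('k::field) pel \<Rightarrow> 'k pel \<Rightarrow> 'k pel" where
  "pmult n f h = (\<lambda>p. if valid_path n p then
      (\<Sum>k\<le>length (snd p). f (fst p, take k (snd p)) *
                           h (walk_end n (fst p) (take k (snd p)), drop k (snd p)))
    else 0)"

definition padd :: "('k::field) pel \<Rightarrow> 'k pel \<Rightarrow> 'k pel" where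
  "padd f h = (\<lambda>p. f p + h p)"

definition psub :: "('k::field) pel \<Rightarrow> 'k pel \<Rightarrow> 'k pel" where
  "psub f h = (\<lambda>p. f p - h p)"

definition pscale :: "'k::field \<Rightarrow> 'k pel \<Rightarrow> 'k pel" where
  "pscale c f = (\<lambda>p. c * f p)"

definition pzero :: "('k::field) pel" where
  "pzero = (\<lambda>p. 0)"

definition basis_el :: "path \<Rightarrow> ('k::field) pel" where
  "basis_el q = (\<lambda>p. if p = q then 1 else 0)"

definition vtx :: "nat \<Rightarrow> ('k::field) pel" where
  "vtx i = basis_el (i, [])"

definition arr :: "nat \<Rightarrow> arrow \<Rightarrow> ('k::field) pel" where
  "arr n a = basis_el (asrc n a, [a])"

definition one_el :: "nat \<Rightarrow> ('k::field) pel" where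
  "one_el n = (\<lambda>p. if snd p = [] \<and> fst p < n then 1 else 0)"

definition rho :: "nat \<Rightarrow> nat \<Rightarrow> ('k::field) pel" where
  "rho n i = psub (pmult n (arr n (Bw i)) (arr n (Fw i)))
                  (pmult n (arr n (Fw (Suc i mod n))) (arr n (Bw (Suc i mod n))))"

definition is_ideal :: "nat \<Rightarrow> ('k::field) pel set \<Rightarrow> bool" where
  "is_ideal n I \<longleftrightarrow> I \<subseteq> path_alg n \<and> pzero \<in> I \<and>
     (\<forall>f\<in>I. \<forall>h\<in>I. padd f h \<in> I) \<and> (\<forall>c. \<forall>f\<in>I. pscale c f \<in> I) \<and>
     (\<forall>f\<in>I. \<forall>u\<in>path_alg n. pmult n u f \<in> I \<and> pmult n f u \<in> I)"

definition Omega :: "nat \<Rightarrow> ('k::field) pel set" where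
  "Omega n = \<Inter>{I. is_ideal n I \<and> (\<forall>i<n. rho n i \<in> I)}"

text \<open>The action descends to Pi_Q = k Qbar/(Omega).\<close>
definition descends :: "nat \<Rightarrow> (('k::field) pel \<Rightarrow> 'k pel) \<Rightarrow> ('k pel \<Rightarrow> 'k pel) \<Rightarrow> bool" where
  "descends n phi dlt \<longleftrightarrow> phi ` Omega n \<subseteq> Omega n \<and> dlt ` Omega n \<subseteq> Omega n"

text \<open>phi is the action of g, dlt the action of x.  A T-module structure is given by
  operators satisfying the defining relations of T, and the module-algebra axioms
  follow from those on the generators g, x.\<close>
definition taft_module_algebra ::
  "nat \<Rightarrow> nat \<Rightarrow> nat \<Rightarrow> 'k::field \<Rightarrow> ('k pel \<Rightarrow> 'k pel) \<Rightarrow> ('k pel \<Rightarrow> 'k pel) \<Rightarrow> bool" where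
  "taft_module_algebra n r m q phi dlt \<longleftrightarrow>
     (\<forall>f\<in>path_alg n. phi f \<in> path_alg n \<and> dlt f \<in> path_alg n) \<and>
     (\<forall>f\<in>path_alg n. \<forall>h\<in>path_alg n. phi (padd f h) = padd (phi f) (phi h) \<and>
                                      dlt (padd f h) = padd (dlt f) (dlt h)) \<and>
     (\<forall>c. \<forall>f\<in>path_alg n. phi (pscale c f) = pscale c (phi f) \<and> dlt (pscale c f) = pscale c (dlt f)) \<and>
     (\<forall>f\<in>path_alg n. \<forall>h\<in>path_alg n. phi (pmult n f h) = pmult n (phi f) (phi h)) \<and>
     (\<forall>f\<in>path_alg n. \<forall>h\<in>path_alg n.
          dlt (pmult n f h) = padd (pmult n f (dlt h)) (pmult n (dlt f) (phi h))) \<and>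
     phi (one_el n) = one_el n \<and> dlt (one_el n) = pzero \<and>
     (\<forall>f\<in>path_alg n. phi (dlt f) = pscale q (dlt (phi f))) \<and>
     (\<forall>f\<in>path_alg n. (phi ^^ m) f = f) \<and>
     (\<forall>f\<in>path_alg n. (dlt ^^ r) f = pzero)"

definition linear_x_action :: "nat \<Rightarrow> (('k::field) pel \<Rightarrow> 'k pel) \<Rightarrow> bool" where
  "linear_x_action n dlt \<longleftrightarrow>
     (\<forall>i<n. \<forall>p. dlt (vtx i) p \<noteq> 0 \<longrightarrow> length (snd p) = 0) \<and>
     (\<forall>a. aidx a < n \<longrightarrow> (\<forall>p. dlt (arr n a) p \<noteq> 0 \<longrightarrow> length (snd p) \<le> 1))"

text \<open>Elements of T: coefficient functions t(a,b) for the basis g^a x^b,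
  0 <= a < m, 0 <= b < r.\<close>
type_synonym 'k tel = "nat \<times> nat \<Rightarrow> 'k"
type_synonym 'k ttel = "(nat \<times> nat) \<times> (nat \<times> nat) \<Rightarrow> 'k"

definition tbasis :: "nat \<Rightarrow> nat \<Rightarrow> (nat \<times> nat) set" where
  "tbasis r m = {..<m} \<times> {..<r}"

definition tset :: "nat \<Rightarrow> nat \<Rightarrow> ('k::field) tel set" where
  "tset r m = {t. \<forall>p. t p \<noteq> 0 \<longrightarrow> p \<in> tbasis r m}"

definition tb :: "nat \<times> nat \<Rightarrow> ('k::field) tel" where
  "tb p = (\<lambda>u. if u = p then 1 else 0)"

text \<open>g^a x^b * g^c x^d = q^(-bc) g^(a+c) x^(b+d), since x g = q^(-1) g x.\<close>
definition bprod :: "nat \<Rightarrow> nat \<Rightarrow> 'k::field \<Rightarrow> nat \<times> nat \<Rightarrow> nat \<times> nat \<Rightarrow> 'k tel" where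
  "bprod r m q p p' = (if snd p + snd p' < r
      then (\<lambda>u. if u = ((fst p + fst p') mod m, snd p + snd p') then (inverse q) ^ (snd p * fst p') else 0)
      else (\<lambda>u. 0))"

definition tmul :: "nat \<Rightarrow> nat \<Rightarrow> 'k::field \<Rightarrow> 'k tel \<Rightarrow> 'k tel \<Rightarrow> 'k tel" where
  "tmul r m q t s = (\<lambda>u. \<Sum>p\<in>tbasis r m. \<Sum>p'\<in>tbasis r m. t p * s p' * bprod r m q p p' u)"

definition tpow :: "nat \<Rightarrow> nat \<Rightarrow> 'k::field \<Rightarrow> 'k tel \<Rightarrow> nat \<Rightarrow> 'k tel" where
  "tpow r m q t k = (tmul r m q t ^^ k) (tb (0, 0))"

definition ttens :: "('k::field) tel \<Rightarrow> 'k tel \<Rightarrow> 'k ttel" where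
  "ttens t s = (\<lambda>w. t (fst w) * s (snd w))"

definition ttmul :: "nat \<Rightarrow> nat \<Rightarrow> 'k::field \<Rightarrow> 'k ttel \<Rightarrow> 'k ttel \<Rightarrow> 'k ttel" where
  "ttmul r m q F G = (\<lambda>w. \<Sum>p\<in>tbasis r m. \<Sum>p2\<in>tbasis r m. \<Sum>p'\<in>tbasis r m. \<Sum>p2'\<in>tbasis r m.
       F (p, p2) * G (p', p2') * bprod r m q p p' (fst w) * bprod r m q p2 p2' (snd w))"

definition ttpow :: "nat \<Rightarrow> nat \<Rightarrow> 'k::field \<Rightarrow> 'k ttel \<Rightarrow> nat \<Rightarrow> 'k ttel" where
  "ttpow r m q F k = (ttmul r m q F ^^ k) (ttens (tb (0, 0)) (tb (0, 0)))"

text \<open>Comultiplication: algebra map with Delta g = g (x) g, Delta x = 1 (x) x + x (x) g.\<close>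
definition tcomult :: "nat \<Rightarrow> nat \<Rightarrow> 'k::field \<Rightarrow> 'k tel \<Rightarrow> 'k ttel" where
  "tcomult r m q t = (\<lambda>w. \<Sum>p\<in>tbasis r m. t p *
      ttmul r m q (ttpow r m q (ttens (tb (1 mod m, 0)) (tb (1 mod m, 0))) (fst p))
                  (ttpow r m q (\<lambda>w'. ttens (tb (0, 0)) (tb (0, 1)) w' + ttens (tb (0, 1)) (tb (1 mod m, 0)) w')
                                (snd p)) w)"

definition tcounit :: "nat \<Rightarrow> ('k::field) tel \<Rightarrow> 'k" where
  "tcounit m t = (\<Sum>a<m. t (a, 0))"

text \<open>Antipode: anti-algebra map with S g = g^(-1) = g^(m-1), S x = - x g^(-1);
  S(g^a x^b) = S(x)^b S(g)^a.\<close>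
definition tantipode :: "nat \<Rightarrow> nat \<Rightarrow> 'k::field \<Rightarrow> 'k tel \<Rightarrow> 'k tel" where
  "tantipode r m q t = (\<lambda>u. \<Sum>p\<in>tbasis r m. t p *
      tmul r m q (tpow r m q (\<lambda>v. - tmul r m q (tb (0, 1)) (tb ((m - 1) mod m, 0)) v) (snd p))
                 (tpow r m q (tb ((m - 1) mod m, 0)) (fst p)) u)"

definition ttspan :: "('k::field) ttel set \<Rightarrow> 'k ttel set" where
  "ttspan X = {F. \<exists>S c. finite S \<and> S \<subseteq> X \<and> F = (\<lambda>w. \<Sum>v\<in>S. c v * v w)}"

definition hopf_ideal :: "nat \<Rightarrow> nat \<Rightarrow> 'k::field \<Rightarrow> 'k tel set \<Rightarrow> bool" where
  "hopf_ideal r m q I \<longleftrightarrow>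
     I \<subseteq> tset r m \<and> (\<lambda>u. 0) \<in> I \<and>
     (\<forall>t\<in>I. \<forall>s\<in>I. (\<lambda>u. t u + s u) \<in> I) \<and> (\<forall>c. \<forall>t\<in>I. (\<lambda>u. c * t u) \<in> I) \<and>
     (\<forall>t\<in>I. \<forall>s\<in>tset r m. tmul r m q s t \<in> I \<and> tmul r m q t s \<in> I) \<and>
     (\<forall>t\<in>I. tcomult r m q t \<in>
        ttspan {ttens u v | u v. (u \<in> I \<and> v \<in> tset r m) \<or> (u \<in> tset r m \<and> v \<in> I)}) \<and>
     (\<forall>t\<in>I. tcounit m t = 0) \<and>
     (\<forall>t\<in>I. tantipode r m q t \<in> I)"

definition tact :: "nat \<Rightarrow> nat \<Rightarrow> ('k::field pel \<Rightarrow> 'k pel) \<Rightarrow> ('k pel \<Rightarrow> 'k pel) \<Rightarrow> 'k tel \<Rightarrow> 'k pel \<Rightarrow> 'k pel" where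
  "tact r m phi dlt t f = (\<lambda>p. \<Sum>ab\<in>tbasis r m. t ab * (phi ^^ fst ab) ((dlt ^^ snd ab) f) p)"

definition inner_faithful ::
  "nat \<Rightarrow> nat \<Rightarrow> nat \<Rightarrow> 'k::field \<Rightarrow> ('k pel \<Rightarrow> 'k pel) \<Rightarrow> ('k pel \<Rightarrow> 'k pel) \<Rightarrow> bool" where
  "inner_faithful n r m q phi dlt \<longleftrightarrow>
     \<not> (\<exists>I. hopf_ideal r m q I \<and> (\<exists>t\<in>I. t \<noteq> (\<lambda>u. 0)) \<and>
            (\<forall>t\<in>I. \<forall>f\<in>path_alg n. tact r m phi dlt t f = pzero))"

definition primitive_root :: "nat \<Rightarrow> 'k::field \<Rightarrow> bool" where
  "primitive_root r q \<longleftrightarrow> q ^ r = 1 \<and> (\<forall>k. 0 < k \<and> k < r \<longrightarrow> q ^ k \<noteq> 1)"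

end

theory Submission
  imports Defs
begin

section \<open>The path algebra\<close>

lemma valid_path_Nil [simp]: "valid_path n (v, []) \<longleftrightarrow> v < n"
  by (simp add: valid_path_def)

lemma valid_path_single [simp]:
  "valid_path n (v, [a]) \<longleftrightarrow> v < n \<and> aidx a < n \<and> asrc n a = v"
  by (auto simp: valid_path_def)

lemma valid_path_pair [simp]:
  "valid_path n (v, [a, b]) \<longleftrightarrow>
     v < n \<and> aidx a < n \<and> aidx b < n \<and> asrc n a = v \<and> asrc n b = atgt n a"
  by (auto simp: valid_path_def)

lemma asrc_less: "aidx a < n \<Longrightarrow> asrc n a < n"
  by (cases a) auto

lemma atgt_less: "aidx a < n \<Longrightarrow> atgt n a < n"
  by (cases a) auto

lemma valid_path_Cons_tl: "valid_path n (v, a # as) \<Longrightarrow> valid_path n (atgt n a, as)"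
  by (auto simp: valid_path_def atgt_less)

lemma path_cases:
  obtains (invalid) "\<not> valid_path n p"
  | (Nil) w where "p = (w, [])" "w < n"
  | (single) w b where "p = (w, [b])" "valid_path n (w, [b])"
  | (long) w b c cs where "p = (w, b # c # cs)"
proof -
  obtain w bs where p: "p = (w, bs)" by (cases p)
  show ?thesis
  proof (cases "valid_path n p")
    case True
    then show ?thesis using that p by (cases bs rule: remdups_adj.cases) auto
  qed (use that in blast)
qed

lemma padd_apply [simp]: "padd f h p = f p + h p"
  by (simp add: padd_def)

lemma psub_apply [simp]: "psub f h p = f p - h p"
  by (simp add: psub_def)

lemma pscale_apply [simp]: "pscale c f p = c * f p"
  by (simp add: pscale_def)

lemma pzero_apply: "pzero p = 0"
  by (simp add: pzero_def)

lemma padd_pzero_left [simp]: "padd pzero f = f"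
  by (simp add: fun_eq_iff pzero_apply)

lemma padd_pzero_right [simp]: "padd f pzero = f"
  by (simp add: fun_eq_iff pzero_apply)

lemma vtx_apply: "vtx i p = (if p = (i, []) then 1 else 0)"
  by (simp add: vtx_def basis_el_def)

lemma arr_apply: "arr n a p = (if p = (asrc n a, [a]) then 1 else 0)"
  by (simp add: arr_def basis_el_def)

lemma psub_eq_padd_pscale: "psub f h = padd f (pscale (-1) h)"
  by (simp add: fun_eq_iff)

lemma sum_single_support:
  assumes "finite A" and "\<And>x. x \<in> A \<Longrightarrow> x \<noteq> a \<Longrightarrow> g x = 0"
  shows "sum g A = (if a \<in> A then g a else 0)"
proof -
  have "sum g A = (\<Sum>x\<in>A. if x = a then g x else 0)"
    using assms(2) by (intro sum.cong) auto
  then show ?thesis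
    by (simp add: sum.delta[OF assms(1)])
qed

lemma pmult_Nil: "pmult n f h (v, []) = (if v < n then f (v, []) * h (v, []) else 0)"
  by (simp add: pmult_def)

lemma pmult_single:
  "pmult n f h (v, [a]) = (if valid_path n (v, [a])
     then f (v, []) * h (v, [a]) + f (v, [a]) * h (atgt n a, []) else 0)"
  unfolding pmult_def by (simp add: atMost_Suc)

lemma pmult_pair:
  "pmult n f h (v, [a, b]) = (if valid_path n (v, [a, b])
     then f (v, []) * h (v, [a, b]) + f (v, [a]) * h (atgt n a, [b]) + f (v, [a, b]) * h (atgt n b, [])
     else 0)"
  unfolding pmult_def by (simp add: atMost_Suc numeral_2_eq_2 add.assoc)

lemma pmult_pzero_left [simp]: "pmult n pzero h = pzero"
  by (simp add: pmult_def fun_eq_iff pzero_apply)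

lemma pmult_pzero_right [simp]: "pmult n f pzero = pzero"
  by (simp add: pmult_def fun_eq_iff pzero_apply)

lemma pmult_pscale_left: "pmult n (pscale c f) h = pscale c (pmult n f h)"
  by (simp add: pmult_def fun_eq_iff sum_distrib_left mult.assoc)

lemma pmult_pscale_right: "pmult n f (pscale c h) = pscale c (pmult n f h)"
  by (simp add: pmult_def fun_eq_iff sum_distrib_left mult.left_commute)

lemma pmult_vtx_left:
  "pmult n (vtx v) h p = (if valid_path n p \<and> fst p = v then h p else 0)"
proof (cases "valid_path n p")
  case True
  obtain w as where p: "p = (w, as)" by (cases p)
  have "pmult n (vtx v) h p
      = (\<Sum>k\<le>length as. vtx v (w, take k as) * h (walk_end n w (take k as), drop k as))"
    using True p by (simp add: pmult_def)
  also have "\<dots> = (if 0 \<in> {..length as} then vtx v (w, []) * h (w, as) else 0)"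
    by (subst sum_single_support[where a = 0]) (auto simp: vtx_apply)
  finally show ?thesis using True p by (simp add: vtx_apply)
qed (simp add: pmult_def)

lemma pmult_vtx_right:
  "pmult n f (vtx v) p = (if valid_path n p \<and> walk_end n (fst p) (snd p) = v then f p else 0)"
proof (cases "valid_path n p")
  case True
  obtain w as where p: "p = (w, as)" by (cases p)
  have "pmult n f (vtx v) p
      = (\<Sum>k\<le>length as. f (w, take k as) * vtx v (walk_end n w (take k as), drop k as))"
    using True p by (simp add: pmult_def)
  also have "\<dots> = (if length as \<in> {..length as}
      then f (w, as) * vtx v (walk_end n w as, []) else 0)"
    by (subst sum_single_support[where a = "length as"]) (auto simp: vtx_apply)
  finally show ?thesis using True p by (simp add: vtx_apply)
qed (simp add: pmult_def)

lemma pmult_vtx_vtx: "pmult n (vtx w) (vtx v) = (if w = v \<and> v < n then vtx v else pzero)"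
  by (auto simp: fun_eq_iff pmult_vtx_left vtx_apply pzero_apply)

lemma pmult_vtx_arr: "aidx a < n \<Longrightarrow> pmult n (vtx (asrc n a)) (arr n a) = arr n a"
  by (auto simp: fun_eq_iff pmult_vtx_left arr_apply asrc_less)

lemma pmult_arr_vtx: "aidx a < n \<Longrightarrow> pmult n (arr n a) (vtx (atgt n a)) = arr n a"
  by (auto simp: fun_eq_iff pmult_vtx_right arr_apply asrc_less)

lemma pmult_arr_left:
  "pmult n (arr n a) h p = (if valid_path n p \<and> fst p = asrc n a \<and> snd p \<noteq> [] \<and> hd (snd p) = a
     then h (atgt n a, tl (snd p)) else 0)"
proof (cases "valid_path n p")
  case True
  obtain w as where p: "p = (w, as)" by (cases p)
  have "pmult n (arr n a) h p
      = (\<Sum>k\<le>length as. arr n a (w, take k as) * h (walk_end n w (take k as), drop k as))"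
    using True p by (simp add: pmult_def)
  also have "\<dots> = (if 1 \<in> {..length as}
      then arr n a (w, take 1 as) * h (walk_end n w (take 1 as), drop 1 as) else 0)"
  proof (rule sum_single_support)
    fix k assume "k \<in> {..length as}" "k \<noteq> 1"
    then have "take k as \<noteq> [a]" by (cases as; cases k) auto
    then show "arr n a (w, take k as) * h (walk_end n w (take k as), drop k as) = 0"
      by (simp add: arr_apply)
  qed simp
  finally show ?thesis using True p by (cases as) (auto simp: arr_apply drop_Suc)
qed (simp add: pmult_def)

lemma basis_el_Cons:
  assumes "valid_path n (v, a # as)"
  shows "basis_el (v, a # as) = pmult n (arr n a) (basis_el (atgt n a, as))"
proof
  fix p :: path
  have "asrc n a = v" using assms by (simp add: valid_path_def)
  moreover have "p = (v, a # as) \<longleftrightarrow> fst p = v \<and> snd p \<noteq> [] \<and> hd (snd p) = a \<and> tl (snd p) = as"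
    by (cases p; cases "snd p") auto
  ultimately show "basis_el (v, a # as) p = pmult n (arr n a) (basis_el (atgt n a, as)) p"
    using assms by (auto simp: pmult_arr_left basis_el_def)
qed

lemma pmult_arr_arr:
  assumes "aidx a < n" "aidx b < n" "asrc n b = atgt n a"
  shows "pmult n (arr n a) (arr n b) = (basis_el (asrc n a, [a, b]) :: 'k::field pel)"
proof -
  have "valid_path n (asrc n a, [a, b])" using assms asrc_less by auto
  then have "basis_el (asrc n a, [a, b]) = pmult n (arr n a) (basis_el (atgt n a, [b]) :: 'k pel)"
    by (rule basis_el_Cons)
  moreover have "basis_el (atgt n a, [b]) = (arr n b :: 'k pel)" using assms by (simp add: arr_def)
  ultimately show ?thesis by (simp only:)
qed

lemma path_alg_valid: "f \<in> path_alg n \<Longrightarrow> f p \<noteq> 0 \<Longrightarrow> valid_path n p"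
  unfolding path_alg_def by blast

lemma path_alg_invalid_zero: "f \<in> path_alg n \<Longrightarrow> \<not> valid_path n p \<Longrightarrow> f p = 0"
  using path_alg_valid by blast

lemma path_alg_finite_support: "f \<in> path_alg n \<Longrightarrow> finite {p. f p \<noteq> 0}"
  by (simp add: path_alg_def)

lemma path_alg_pzero [simp]: "pzero \<in> path_alg n"
  by (simp add: path_alg_def pzero_apply)

lemma path_alg_support_subset:
  assumes "f \<in> path_alg n" "h \<in> path_alg n" "\<And>p. F p \<noteq> 0 \<Longrightarrow> f p \<noteq> 0 \<or> h p \<noteq> 0"
  shows "F \<in> path_alg n"
proof -
  have "{p. F p \<noteq> 0} \<subseteq> {p. f p \<noteq> 0} \<union> {p. h p \<noteq> 0}"
    using assms(3) by blast
  then show ?thesis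
    using assms by (auto simp: path_alg_def intro: finite_subset)
qed

lemma path_alg_padd: "f \<in> path_alg n \<Longrightarrow> h \<in> path_alg n \<Longrightarrow> padd f h \<in> path_alg n"
  by (rule path_alg_support_subset[of f n h]) auto

lemma path_alg_pscale: "f \<in> path_alg n \<Longrightarrow> pscale c f \<in> path_alg n"
  by (rule path_alg_support_subset[of f n f]) auto

lemma path_alg_psub: "f \<in> path_alg n \<Longrightarrow> h \<in> path_alg n \<Longrightarrow> psub f h \<in> path_alg n"
  by (rule path_alg_support_subset[of f n h]) auto

lemma path_alg_basis_el: "valid_path n p \<Longrightarrow> basis_el p \<in> path_alg n"
  by (auto simp: path_alg_def basis_el_def)

lemma path_alg_vtx: "i < n \<Longrightarrow> vtx i \<in> path_alg n"
  by (simp add: vtx_def path_alg_basis_el)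

lemma path_alg_arr: "aidx a < n \<Longrightarrow> arr n a \<in> path_alg n"
  by (simp add: arr_def path_alg_basis_el asrc_less)

lemma pmult_nonzero_split:
  assumes "pmult n f h p \<noteq> 0"
  obtains k where "f (fst p, take k (snd p)) \<noteq> 0"
    "h (walk_end n (fst p) (take k (snd p)), drop k (snd p)) \<noteq> 0" "valid_path n p"
proof -
  have v: "valid_path n p" using assms by (auto simp: pmult_def split: if_splits)
  obtain k where "f (fst p, take k (snd p)) *
      h (walk_end n (fst p) (take k (snd p)), drop k (snd p)) \<noteq> 0"
    using assms v by (auto simp: pmult_def intro: sum.not_neutral_contains_not_neutral)
  then show ?thesis using that[OF _ _ v] by auto
qed

lemma path_alg_pmult:
  assumes f: "f \<in> path_alg n" and h: "h \<in> path_alg n"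
  shows "pmult n f h \<in> path_alg n"
proof -
  let ?concat = "\<lambda>(x :: path, y :: path). (fst x, snd x @ snd y)"
  have "{p. pmult n f h p \<noteq> 0} \<subseteq> ?concat ` ({p. f p \<noteq> 0} \<times> {p. h p \<noteq> 0})"
  proof
    fix p assume "p \<in> {p. pmult n f h p \<noteq> 0}"
    then obtain k where "f (fst p, take k (snd p)) \<noteq> 0"
      "h (walk_end n (fst p) (take k (snd p)), drop k (snd p)) \<noteq> 0"
      by (auto elim: pmult_nonzero_split)
    then show "p \<in> ?concat ` ({p. f p \<noteq> 0} \<times> {p. h p \<noteq> 0})"
      by (intro image_eqI[where x = "((fst p, take k (snd p)),
          (walk_end n (fst p) (take k (snd p)), drop k (snd p)))"]) auto
  qed
  then have "finite {p. pmult n f h p \<noteq> 0}"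
    using path_alg_finite_support[OF f] path_alg_finite_support[OF h]
    by (blast intro: finite_subset)
  then show ?thesis
    by (auto simp: path_alg_def elim: pmult_nonzero_split)
qed

lemma path_alg_fun_upd_zero: "f \<in> path_alg n \<Longrightarrow> f(p := 0) \<in> path_alg n"
  by (rule path_alg_support_subset[of f n f]) (auto split: if_split_asm)

lemma path_alg_linear_expansion:
  fixes L :: "'k::field pel \<Rightarrow> 'k pel"
  assumes add: "\<And>f h. f \<in> path_alg n \<Longrightarrow> h \<in> path_alg n \<Longrightarrow> L (padd f h) = padd (L f) (L h)"
    and scale: "\<And>c f. f \<in> path_alg n \<Longrightarrow> L (pscale c f) = pscale c (L f)"
    and f: "f \<in> path_alg n"
  shows "L f x = (\<Sum>p | f p \<noteq> 0. f p * L (basis_el p) x)"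
proof -
  have "L f x = (\<Sum>p\<in>S. f p * L (basis_el p) x)"
    if "finite S" "f \<in> path_alg n" "{p. f p \<noteq> 0} \<subseteq> S" for S f
    using that
  proof (induction S arbitrary: f rule: finite_induct)
    case empty
    then have "f = pscale 0 pzero" by (auto simp: fun_eq_iff pzero_apply)
    then have "L f x = 0 * L pzero x"
      using scale[OF path_alg_pzero, of 0] by (metis pscale_apply)
    then show ?case by simp
  next
    case (insert y S)
    define f' where "f' = f(y := 0)"
    have "f' \<in> path_alg n"
      unfolding f'_def by (rule path_alg_fun_upd_zero) (use insert.prems in simp)
    moreover have "{p. f' p \<noteq> 0} \<subseteq> S"
      using insert.prems by (auto simp: f'_def)
    ultimately have f': "f' \<in> path_alg n" "{p. f' p \<noteq> 0} \<subseteq> S" .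
    have sum_f': "(\<Sum>p\<in>S. f' p * L (basis_el p) x) = (\<Sum>p\<in>S. f p * L (basis_el p) x)"
      using insert.hyps by (intro sum.cong) (auto simp: f'_def)
    show ?case
    proof (cases "f y = 0")
      case True
      then have "L f x = L f' x" by (simp add: f'_def fun_upd_idem)
      also have "\<dots> = (\<Sum>p\<in>S. f p * L (basis_el p) x)" using insert.IH[OF f'] sum_f' by simp
      finally show ?thesis using insert.hyps True by simp
    next
      case False
      then have y: "basis_el y \<in> path_alg n"
        using insert.prems path_alg_valid path_alg_basis_el by blast
      have "L f = L (padd (pscale (f y) (basis_el y)) f')"
        by (rule arg_cong[where f = L]) (simp add: fun_eq_iff f'_def basis_el_def)
      then have "L f x = f y * L (basis_el y) x + L f' x"
        using add[OF path_alg_pscale[OF y] f'(1)] scale[OF y] by simp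
      then show ?thesis using insert.IH[OF f'] sum_f' insert.hyps by simp
    qed
  qed
  then show ?thesis using f path_alg_finite_support by blast
qed

section \<open>An ideal containing the preprojective relations\<close>

definition prv :: "nat \<Rightarrow> nat \<Rightarrow> nat" where
  "prv n v = (v + n - 1) mod n"

abbreviation nxt :: "nat \<Rightarrow> nat \<Rightarrow> nat" where
  "nxt n i \<equiv> Suc i mod n"

lemma prv_less: "0 < n \<Longrightarrow> prv n v < n"
  by (simp add: prv_def)

lemma nxt_prv: "v < n \<Longrightarrow> nxt n (prv n v) = v"
  by (cases v) (auto simp: prv_def mod_Suc_eq)

lemma prv_nxt: "i < n \<Longrightarrow> prv n (nxt n i) = i"
  by (cases "Suc i = n") (auto simp: prv_def)

text \<open>Each relation \<open>rho n i\<close> lives in length 2 and has opposite coefficients on the two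
  length-2 cycles at vertex \<open>i + 1\<close>; these linear conditions cut out an ideal.\<close>

definition preproj_hull :: "nat \<Rightarrow> 'k::field pel set" where
  "preproj_hull n = {f \<in> path_alg n. (\<forall>v. f (v, []) = 0) \<and> (\<forall>v a. f (v, [a]) = 0) \<and>
     (\<forall>v i j. f (v, [Fw i, Fw j]) = 0 \<and> f (v, [Bw i, Bw j]) = 0) \<and>
     (\<forall>v<n. f (v, [Bw (prv n v), Fw (prv n v)]) + f (v, [Fw v, Bw v]) = 0)}"

lemma pmult_pair_left_preproj_hull:
  assumes "f \<in> preproj_hull n" "u \<in> path_alg n"
  shows "pmult n u f (v, [a, b]) = u (v, []) * f (v, [a, b])"
  using assms path_alg_invalid_zero[of f n "(v, [a, b])"]
  by (auto simp: pmult_pair preproj_hull_def)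

lemma pmult_pair_right_preproj_hull:
  assumes "f \<in> preproj_hull n" "u \<in> path_alg n"
  shows "pmult n f u (v, [a, b]) = f (v, [a, b]) * u (atgt n b, [])"
  using assms path_alg_invalid_zero[of f n "(v, [a, b])"]
  by (auto simp: pmult_pair preproj_hull_def)

lemma is_ideal_preproj_hull: "is_ideal n (preproj_hull n)"
  unfolding is_ideal_def
proof (intro conjI ballI allI)
  fix f h :: "'k::field pel" assume f: "f \<in> preproj_hull n" and h: "h \<in> preproj_hull n"
  have "padd f h (v, [Bw (prv n v), Fw (prv n v)]) + padd f h (v, [Fw v, Bw v]) = 0" if "v < n" for v
  proof -
    have "padd f h (v, [Bw (prv n v), Fw (prv n v)]) + padd f h (v, [Fw v, Bw v])
      = (f (v, [Bw (prv n v), Fw (prv n v)]) + f (v, [Fw v, Bw v]))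
        + (h (v, [Bw (prv n v), Fw (prv n v)]) + h (v, [Fw v, Bw v]))"
      by (simp add: algebra_simps)
    also have "\<dots> = 0" using f h that by (simp add: preproj_hull_def)
    finally show ?thesis .
  qed
  then show "padd f h \<in> preproj_hull n"
    using f h by (auto simp: preproj_hull_def path_alg_padd)
next
  fix c :: "'k::field" and f :: "'k pel" assume "f \<in> preproj_hull n"
  then show "pscale c f \<in> preproj_hull n"
    by (auto simp: preproj_hull_def path_alg_pscale simp flip: distrib_left)
next
  fix f u :: "'k::field pel" assume f: "f \<in> preproj_hull n" and u: "u \<in> path_alg n"
  then have f_PA: "f \<in> path_alg n" by (simp add: preproj_hull_def)
  show "pmult n u f \<in> preproj_hull n"
    using f u path_alg_pmult[OF u f_PA]
    by (auto simp: preproj_hull_def pmult_Nil pmult_single pmult_pair_left_preproj_hull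
        simp flip: distrib_left)
  have "pmult n f u (v, [Bw (prv n v), Fw (prv n v)]) + pmult n f u (v, [Fw v, Bw v]) = 0"
    if "v < n" for v
    using f u that by (simp add: pmult_pair_right_preproj_hull nxt_prv preproj_hull_def
        flip: distrib_right)
  then show "pmult n f u \<in> preproj_hull n"
    using f u path_alg_pmult[OF f_PA u]
    by (auto simp: preproj_hull_def pmult_Nil pmult_single pmult_pair_right_preproj_hull)
qed (auto simp: preproj_hull_def pzero_apply)

lemma rho_eq_basis:
  assumes "i < n"
  shows "rho n i = psub (basis_el (nxt n i, [Bw i, Fw i]))
    (basis_el (nxt n i, [Fw (nxt n i), Bw (nxt n i)]) :: 'k::field pel)"
  using assms pmult_arr_arr[where 'k = 'k, of "Bw i" n "Fw i"]
    pmult_arr_arr[where 'k = 'k, of "Fw (nxt n i)" n "Bw (nxt n i)"]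
  by (simp add: rho_def)

lemma path_alg_rho: "i < n \<Longrightarrow> rho n i \<in> path_alg n"
  by (simp add: rho_eq_basis path_alg_psub path_alg_basis_el)

lemma rho_in_preproj_hull: "i < n \<Longrightarrow> rho n i \<in> preproj_hull n"
  unfolding preproj_hull_def
  by (auto simp: rho_eq_basis prv_nxt intro!: path_alg_psub path_alg_basis_el)
    (auto simp: basis_el_def prv_nxt)

lemma Omega_subset_preproj_hull: "Omega n \<subseteq> preproj_hull n"
  unfolding Omega_def using is_ideal_preproj_hull rho_in_preproj_hull by blast

lemma rho_in_Omega: "i < n \<Longrightarrow> rho n i \<in> Omega n"
  unfolding Omega_def by blast

section \<open>The Hopf ideal generated by x\<close>

definition x_degree_ge :: "nat \<Rightarrow> 'k::field tel \<Rightarrow> bool" where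
  "x_degree_ge k t \<longleftrightarrow> (\<forall>u. snd u < k \<longrightarrow> t u = 0)"

definition tens_x_degree_ge :: "nat \<Rightarrow> 'k::field ttel \<Rightarrow> bool" where
  "tens_x_degree_ge k F \<longleftrightarrow> (\<forall>w. snd (fst w) + snd (snd w) < k \<longrightarrow> F w = 0)"

definition x_ideal :: "nat \<Rightarrow> nat \<Rightarrow> 'k::field tel set" where
  "x_ideal r m = {t \<in> tset r m. x_degree_ge 1 t}"

lemma x_degree_geD: "x_degree_ge k t \<Longrightarrow> snd u < k \<Longrightarrow> t u = 0"
  unfolding x_degree_ge_def by blast

lemma tens_x_degree_geD: "tens_x_degree_ge k F \<Longrightarrow> snd (fst w) + snd (snd w) < k \<Longrightarrow> F w = 0"
  unfolding tens_x_degree_ge_def by blast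

lemma tb_in_tset: "p \<in> tbasis r m \<Longrightarrow> tb p \<in> tset r m"
  by (simp add: tset_def tb_def)

lemma tb_in_x_ideal: "p \<in> tbasis r m \<Longrightarrow> snd p \<noteq> 0 \<Longrightarrow> tb p \<in> x_ideal r m"
  by (auto simp: x_ideal_def x_degree_ge_def tset_def tb_def)

lemma x_ideal_x_free_zero: "t \<in> x_ideal r m \<Longrightarrow> snd p = 0 \<Longrightarrow> t p = 0"
  by (cases p) (simp add: x_ideal_def x_degree_ge_def)

lemma bprod_nonzero:
  assumes "bprod r m q p p' u \<noteq> 0" "0 < m"
  shows "snd u = snd p + snd p'" "u \<in> tbasis r m"
  using assms by (auto simp: bprod_def tbasis_def split: if_splits)

lemma tmul_in_tset:
  assumes "0 < m"
  shows "tmul r m q t s \<in> tset r m"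
  unfolding tset_def
proof (intro CollectI allI impI)
  fix u assume "tmul r m q t s u \<noteq> 0"
  then obtain p p' where "bprod r m q p p' u \<noteq> 0"
    unfolding tmul_def by (metis (no_types, lifting) mult_eq_0_iff sum.neutral)
  then show "u \<in> tbasis r m" using bprod_nonzero(2)[OF _ assms] by blast
qed

lemma tmul_x_degree_ge:
  assumes "x_degree_ge k t" "x_degree_ge j s"
  shows "x_degree_ge (k + j) (tmul r m q t s)"
  unfolding x_degree_ge_def tmul_def
proof (intro allI impI sum.neutral ballI)
  fix u :: "nat \<times> nat" and p p' assume "snd u < k + j"
  show "t p * s p' * bprod r m q p p' u = 0"
  proof (cases "bprod r m q p p' u = 0")
    case False
    then have "snd p < k \<or> snd p' < j"
      using \<open>snd u < k + j\<close> by (auto simp: bprod_def split: if_splits)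
    then show ?thesis using assms unfolding x_degree_ge_def by (metis mult_eq_0_iff)
  qed simp
qed

lemma tpow_x_degree_ge: "x_degree_ge 1 t \<Longrightarrow> x_degree_ge k (tpow r m q t k)"
proof (induction k)
  case (Suc k)
  then show ?case using tmul_x_degree_ge[of 1 t k] by (simp add: tpow_def)
qed (simp add: x_degree_ge_def)

lemma ttmul_tens_x_degree_ge:
  assumes "tens_x_degree_ge k F" "tens_x_degree_ge j G"
  shows "tens_x_degree_ge (k + j) (ttmul r m q F G)"
  unfolding tens_x_degree_ge_def ttmul_def
proof (intro allI impI sum.neutral ballI)
  fix w :: "(nat \<times> nat) \<times> (nat \<times> nat)" and p p2 p' p2'
  assume "snd (fst w) + snd (snd w) < k + j"
  show "F (p, p2) * G (p', p2') * bprod r m q p p' (fst w) * bprod r m q p2 p2' (snd w) = 0"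
  proof (cases "bprod r m q p p' (fst w) = 0 \<or> bprod r m q p2 p2' (snd w) = 0")
    case False
    then have "snd p + snd p2 < k \<or> snd p' + snd p2' < j"
      using \<open>snd (fst w) + snd (snd w) < k + j\<close> by (auto simp: bprod_def split: if_splits)
    then show ?thesis using assms unfolding tens_x_degree_ge_def by (metis fst_conv mult_eq_0_iff snd_conv)
  qed auto
qed

lemma ttpow_tens_x_degree_ge: "tens_x_degree_ge 1 F \<Longrightarrow> tens_x_degree_ge k (ttpow r m q F k)"
proof (induction k)
  case (Suc k)
  then show ?case using ttmul_tens_x_degree_ge[of 1 F k] by (simp add: ttpow_def)
qed (simp add: tens_x_degree_ge_def)

lemma ttmul_support:
  assumes "ttmul r m q F G w \<noteq> 0" "0 < m"
  shows "fst w \<in> tbasis r m \<and> snd w \<in> tbasis r m"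
proof -
  obtain p p2 p' p2' where "bprod r m q p p' (fst w) \<noteq> 0" "bprod r m q p2 p2' (snd w) \<noteq> 0"
    using assms(1) unfolding ttmul_def by (metis (no_types, lifting) mult_eq_0_iff sum.neutral)
  then show ?thesis using bprod_nonzero(2)[OF _ assms(2)] by blast
qed

lemma ttspan_of_support:
  fixes F :: "'k::field ttel"
  assumes "\<And>w. F w \<noteq> 0 \<Longrightarrow> fst w \<in> tbasis r m \<and> snd w \<in> tbasis r m"
    and "\<And>w. F w \<noteq> 0 \<Longrightarrow> ttens (tb (fst w)) (tb (snd w)) \<in> X"
  shows "F \<in> ttspan X"
proof -
  define W where "W = {w \<in> tbasis r m \<times> tbasis r m. F w \<noteq> 0}"
  define e :: "(nat \<times> nat) \<times> (nat \<times> nat) \<Rightarrow> 'k ttel"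
    where "e w = ttens (tb (fst w)) (tb (snd w))" for w
  have finW: "finite W" unfolding W_def by (simp add: tbasis_def)
  have e_apply: "e w w' = (if w' = w then 1 else 0)" for w w'
    by (auto simp: e_def ttens_def tb_def prod_eq_iff)
  have inj: "inj_on e W"
  proof (rule inj_onI)
    fix x y assume "e x = e y"
    then have "e x x = e y x" by simp
    then show "x = y" by (simp add: e_apply split: if_splits)
  qed
  define c where "c v = F (inv_into W e v)" for v
  have "F = (\<lambda>w. \<Sum>v\<in>e ` W. c v * v w)"
  proof
    fix w
    have "(\<Sum>v\<in>e ` W. c v * v w) = (\<Sum>w'\<in>W. F w' * e w' w)"
      by (simp add: sum.reindex[OF inj] inv_into_f_f[OF inj] c_def)
    also have "\<dots> = (\<Sum>w'\<in>W. if w' = w then F w' else 0)"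
      by (intro sum.cong refl) (simp add: e_apply)
    also have "\<dots> = (if w \<in> W then F w else 0)"
      by (simp add: sum.delta[OF finW])
    also have "\<dots> = F w"
      using assms(1)[of w] by (cases "F w = 0") (auto simp: W_def mem_Times_iff)
    finally show "F w = (\<Sum>v\<in>e ` W. c v * v w)" by simp
  qed
  moreover have "e ` W \<subseteq> X" using assms(2) by (auto simp: W_def e_def)
  ultimately show ?thesis
    unfolding ttspan_def using finW by blast
qed

lemma tcomult_x_ideal:
  fixes t :: "'k::field tel"
  assumes "t \<in> x_ideal r m" "0 < m"
  shows "tcomult r m q t
    \<in> ttspan {ttens u v | u v. (u \<in> x_ideal r m \<and> v \<in> tset r m) \<or> (u \<in> tset r m \<and> v \<in> x_ideal r m)}"
proof (rule ttspan_of_support)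
  let ?G = "ttens (tb (1 mod m, 0)) (tb (1 mod m, 0)) :: 'k ttel"
  let ?X = "(\<lambda>w'. ttens (tb (0, 0)) (tb (0, 1)) w' + ttens (tb (0, 1)) (tb (1 mod m, 0)) w') :: 'k ttel"
  fix w assume w: "tcomult r m q t w \<noteq> 0"
  then obtain p where p: "t p \<noteq> 0" "ttmul r m q (ttpow r m q ?G (fst p)) (ttpow r m q ?X (snd p)) w \<noteq> 0"
    unfolding tcomult_def by (metis (no_types, lifting) mult_eq_0_iff sum.neutral)
  then show basis: "fst w \<in> tbasis r m \<and> snd w \<in> tbasis r m"
    using ttmul_support[OF _ assms(2)] by blast
  have "tens_x_degree_ge 1 ?X"
    by (auto simp: tens_x_degree_ge_def ttens_def tb_def)
  then have deg: "tens_x_degree_ge (0 + snd p)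
      (ttmul r m q (ttpow r m q ?G (fst p)) (ttpow r m q ?X (snd p)))"
    by (intro ttmul_tens_x_degree_ge ttpow_tens_x_degree_ge) (simp add: tens_x_degree_ge_def)
  have "1 \<le> snd p"
    using x_ideal_x_free_zero[OF assms(1)] p(1) by (cases "snd p") auto
  moreover have "\<not> snd (fst w) + snd (snd w) < 0 + snd p"
    using tens_x_degree_geD[OF deg] p(2) by blast
  ultimately have "snd (fst w) \<noteq> 0 \<or> snd (snd w) \<noteq> 0" by linarith
  let ?u = "tb (fst w) :: 'k tel" and ?v = "tb (snd w) :: 'k tel"
  have "(?u \<in> x_ideal r m \<and> ?v \<in> tset r m) \<or> (?u \<in> tset r m \<and> ?v \<in> x_ideal r m)"
    using basis \<open>snd (fst w) \<noteq> 0 \<or> snd (snd w) \<noteq> 0\<close> by (auto intro: tb_in_tset tb_in_x_ideal)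
  then show "ttens ?u ?v
    \<in> {ttens u v | u v. (u \<in> x_ideal r m \<and> v \<in> tset r m) \<or> (u \<in> tset r m \<and> v \<in> x_ideal r m)}"
    by blast
qed

lemma tantipode_x_ideal:
  fixes t :: "'k::field tel"
  assumes "t \<in> x_ideal r m" "0 < m"
  shows "tantipode r m q t \<in> x_ideal r m"
proof -
  let ?Sx = "(\<lambda>v. - tmul r m q (tb (0, 1)) (tb ((m - 1) mod m, 0)) v) :: 'k tel"
  let ?Sg = "tb ((m - 1) mod m, 0) :: 'k tel"
  have "x_degree_ge (1 + 0) (tmul r m q (tb (0, 1)) ?Sg)"
    by (rule tmul_x_degree_ge) (auto simp: x_degree_ge_def tb_def)
  then have Sx: "x_degree_ge 1 ?Sx" by (simp add: x_degree_ge_def)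
  have "tantipode r m q t u = 0" if "snd u < 1" for u
    unfolding tantipode_def
  proof (intro sum.neutral ballI)
    fix p
    have deg: "x_degree_ge (snd p + 0) (tmul r m q (tpow r m q ?Sx (snd p)) (tpow r m q ?Sg (fst p)))"
      by (intro tmul_x_degree_ge tpow_x_degree_ge Sx) (simp add: x_degree_ge_def)
    show "t p * tmul r m q (tpow r m q ?Sx (snd p)) (tpow r m q ?Sg (fst p)) u = 0"
    proof (cases "t p = 0")
      case False
      then have "snd u < snd p + 0"
        using x_ideal_x_free_zero[OF assms(1)] that by (cases "snd p") auto
      then show ?thesis using x_degree_geD[OF deg] by simp
    qed simp
  qed
  moreover have "tantipode r m q t \<in> tset r m"
    unfolding tset_def
  proof (intro CollectI allI impI)
    fix u assume "tantipode r m q t u \<noteq> 0"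
    then obtain p where "tmul r m q (tpow r m q ?Sx (snd p)) (tpow r m q ?Sg (fst p)) u \<noteq> 0"
      unfolding tantipode_def by (metis (no_types, lifting) mult_eq_0_iff sum.neutral)
    then show "u \<in> tbasis r m" using tmul_in_tset[OF assms(2)] unfolding tset_def by blast
  qed
  ultimately show ?thesis by (simp add: x_ideal_def x_degree_ge_def)
qed

lemma hopf_ideal_x_ideal:
  assumes "0 < m"
  shows "hopf_ideal r m q (x_ideal r m :: 'k::field tel set)"
  unfolding hopf_ideal_def
proof (intro conjI ballI allI)
  fix t s :: "'k tel" assume t: "t \<in> x_ideal r m"
  show "tcomult r m q t
    \<in> ttspan {ttens u v | u v. (u \<in> x_ideal r m \<and> v \<in> tset r m) \<or> (u \<in> tset r m \<and> v \<in> x_ideal r m)}"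
    using tcomult_x_ideal[OF t assms] .
  show "tantipode r m q t \<in> x_ideal r m" using tantipode_x_ideal[OF t assms] .
  show "tcounit m t = 0" using t by (simp add: tcounit_def x_ideal_def x_degree_ge_def)
  { assume "s \<in> x_ideal r m"
    then show "(\<lambda>u. t u + s u) \<in> x_ideal r m"
      using t by (auto simp: x_ideal_def x_degree_ge_def tset_def) (metis add.right_neutral) }
  { assume s: "s \<in> tset r m"
    have "x_degree_ge 0 s" by (simp add: x_degree_ge_def)
    then show "tmul r m q s t \<in> x_ideal r m" "tmul r m q t s \<in> x_ideal r m"
      using t tmul_x_degree_ge[of 0 s 1 t] tmul_x_degree_ge[of 1 t 0 s] tmul_in_tset[OF assms]
      by (auto simp: x_ideal_def) }
qed (auto simp: x_ideal_def x_degree_ge_def tset_def)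

lemma x_in_x_ideal: "1 < r \<Longrightarrow> 0 < m \<Longrightarrow> tb (0, 1) \<in> x_ideal r m"
  by (simp add: tb_in_x_ideal tbasis_def)

lemma tb_nonzero: "tb p \<noteq> (\<lambda>u. 0 :: 'k::field)"
  by (metis one_neq_zero tb_def)

lemma tact_x_ideal:
  assumes "t \<in> x_ideal r m" "dlt f = pzero" "dlt pzero = pzero" "phi pzero = pzero"
  shows "tact r m phi dlt t f = pzero"
proof -
  have fix_pzero: "(F ^^ k) pzero = pzero" if "F pzero = pzero" for F :: "'k::field pel \<Rightarrow> 'k pel" and k
    using that by (induction k) simp_all
  have "t ab * (phi ^^ fst ab) ((dlt ^^ snd ab) f) p = 0" for ab p
  proof (cases "snd ab")
    case 0
    then have "t ab = 0" using x_ideal_x_free_zero[OF assms(1)] by simp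
    then show ?thesis by simp
  next
    case (Suc k)
    then have "(dlt ^^ snd ab) f = pzero"
      using assms(2,3) fix_pzero[of dlt k] by (simp add: funpow_swap1)
    then show ?thesis using fix_pzero[of phi] assms(4) by (simp add: pzero_apply)
  qed
  then show ?thesis by (simp add: tact_def fun_eq_iff sum.neutral pzero_apply)
qed


locale reflection_indices =
  fixes n d :: nat
  assumes n_ge_3: "3 \<le> n" and d_less: "d < n"
begin

definition \<sigma> :: "nat \<Rightarrow> nat" where
  "\<sigma> v = (2 * n - (d + v)) mod n"

definition \<tau> :: "nat \<Rightarrow> nat" where
  "\<tau> i = (2 * n - (d + i + 1)) mod n"

lemma n_pos: "0 < n"
  using n_ge_3 by simp

lemma int_\<sigma>: "v < n \<Longrightarrow> int (\<sigma> v) = (- int d - int v) mod int n"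
proof -
  assume "v < n"
  then have "int (2 * n - (d + v)) = (- int d - int v) + 2 * int n" using d_less by linarith
  then show ?thesis by (simp add: \<sigma>_def zmod_int)
qed

lemma int_\<tau>: "i < n \<Longrightarrow> int (\<tau> i) = (- int d - 1 - int i) mod int n"
proof -
  assume "i < n"
  then have "int (2 * n - (d + i + 1)) = (- int d - 1 - int i) + 2 * int n" using d_less by linarith
  then show ?thesis by (simp add: \<tau>_def zmod_int)
qed

lemma int_nxt: "int (nxt n i) = (int i + 1) mod int n"
  by (simp add: zmod_int add.commute)

lemma less_n_eq_iff_int_mod: "a < n \<Longrightarrow> b < n \<Longrightarrow> a = b \<longleftrightarrow> int a mod int n = int b mod int n"
  by (metis mod_less of_nat_eq_iff zmod_int)

lemma \<sigma>_less [simp]: "\<sigma> v < n"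
  using n_pos by (simp add: \<sigma>_def)

lemma \<tau>_less [simp]: "\<tau> i < n"
  using n_pos by (simp add: \<tau>_def)

lemma \<sigma>_\<sigma> [simp]: "v < n \<Longrightarrow> \<sigma> (\<sigma> v) = v"
  by (simp add: less_n_eq_iff_int_mod int_\<sigma> mod_simps)

lemma \<tau>_\<tau> [simp]: "i < n \<Longrightarrow> \<tau> (\<tau> i) = i"
  by (simp add: less_n_eq_iff_int_mod int_\<tau> mod_simps)

lemma \<tau>_eq_\<sigma>_nxt: "i < n \<Longrightarrow> \<tau> i = \<sigma> (nxt n i)"
  by (simp add: less_n_eq_iff_int_mod int_\<tau> int_\<sigma> int_nxt mod_simps algebra_simps)

lemma \<sigma>_eq_nxt_\<tau>: "i < n \<Longrightarrow> \<sigma> i = nxt n (\<tau> i)"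
  by (simp add: less_n_eq_iff_int_mod int_\<tau> int_\<sigma> int_nxt mod_simps algebra_simps)

lemma \<tau>_nxt: "i < n \<Longrightarrow> \<tau> (nxt n i) = prv n (\<tau> i)"
  using prv_nxt[OF \<tau>_less, of "nxt n i"] \<sigma>_eq_nxt_\<tau>[of "nxt n i"] \<tau>_eq_\<sigma>_nxt[of i] n_pos
  by simp

lemma \<sigma>_fixed_iff: "k < n \<Longrightarrow> \<sigma> k = k \<longleftrightarrow> int n dvd 2 * int k + int d"
proof -
  assume k: "k < n"
  have "\<sigma> k = k \<longleftrightarrow> (- int d - int k) mod int n = int k mod int n"
    using k by (simp add: less_n_eq_iff_int_mod int_\<sigma>)
  also have "\<dots> \<longleftrightarrow> int n dvd - (2 * int k + int d)"
    by (simp add: mod_eq_dvd_iff algebra_simps)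
  finally show ?thesis by (simp only: dvd_minus_iff)
qed

lemma \<sigma>_nxt_eq_iff: "i < n \<Longrightarrow> \<sigma> (nxt n i) = i \<longleftrightarrow> int n dvd 2 * int i + int d + 1"
proof -
  assume i: "i < n"
  have "\<sigma> (nxt n i) = i \<longleftrightarrow> (- int d - 1 - int i) mod int n = int i mod int n"
    using i by (simp add: less_n_eq_iff_int_mod \<tau>_eq_\<sigma>_nxt[symmetric] int_\<tau>)
  also have "\<dots> \<longleftrightarrow> int n dvd (- int d - 1 - int i) - int i"
    by (rule mod_eq_dvd_iff)
  also have "(- int d - 1 - int i) - int i = - (2 * int i + int d + 1)"
    by simp
  finally show ?thesis by (simp only: dvd_minus_iff)
qed

lemma symmetric_vertex_or_edge_exists: "(\<exists>k<n. \<sigma> k = k) \<or> (\<exists>i<n. \<sigma> (nxt n i) = i)"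
proof -
  define j where "j = (n - 1) * d div 2"
  define e where "e = (n - 1) * d mod 2"
  have "(n - 1) * d + d = n * d"
    using n_pos by (cases n) auto
  then have "2 * j + d + e = n * d"
    unfolding j_def e_def by presburger
  then have "2 * int j + int d + int e = int n * int d"
    by (metis of_nat_add of_nat_mult of_nat_numeral)
  then have eq: "2 * int (j mod n) + int d + int e = 2 * (int (j mod n) - int j) + int n * int d"
    by (simp add: algebra_simps)
  have "int n dvd 2 * (int (j mod n) - int j) + int n * int d"
    by (intro dvd_add dvd_mult dvd_triv_left) (simp add: mod_eq_dvd_iff[symmetric] zmod_int)
  then have dvd: "int n dvd 2 * int (j mod n) + int d + int e"
    by (simp only: eq)
  have jn: "j mod n < n" using n_pos by simp
  have "e = 0 \<or> e = 1" unfolding e_def by presburger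
  then show ?thesis
  proof
    assume "e = 0"
    then have "\<sigma> (j mod n) = j mod n" using \<sigma>_fixed_iff[OF jn] dvd by simp
    then show ?thesis using jn by blast
  next
    assume "e = 1"
    then have "\<sigma> (nxt n (j mod n)) = j mod n" using \<sigma>_nxt_eq_iff[OF jn] dvd by simp
    then show ?thesis using jn by blast
  qed
qed

lemma nxt_ne: "nxt n v \<noteq> v"
proof
  assume h: "nxt n v = v"
  then have "v < n" using n_pos by (metis mod_less_divisor)
  then consider "Suc v = n" | "Suc v < n" by linarith
  then show False using h n_ge_3 by cases simp_all
qed

lemma prv_ne: "v < n \<Longrightarrow> prv n v \<noteq> v"
  using nxt_ne[of "prv n v"] by (auto simp: nxt_prv)

primrec arefl :: "arrow \<Rightarrow> arrow" where
  "arefl (Fw i) = Bw (\<tau> i)"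
| "arefl (Bw i) = Fw (\<tau> i)"

lemma aidx_arefl [simp]: "aidx (arefl a) < n"
  by (cases a) simp_all

lemma arefl_arefl [simp]: "aidx a < n \<Longrightarrow> arefl (arefl a) = a"
  by (cases a) simp_all

lemma asrc_arefl: "aidx a < n \<Longrightarrow> asrc n (arefl a) = \<sigma> (asrc n a)"
  by (cases a) (simp add: \<sigma>_eq_nxt_\<tau>, simp add: \<tau>_eq_\<sigma>_nxt)

lemma atgt_arefl: "aidx a < n \<Longrightarrow> atgt n (arefl a) = \<sigma> (atgt n a)"
  by (cases a) (simp add: \<tau>_eq_\<sigma>_nxt, simp add: \<sigma>_eq_nxt_\<tau>)

definition prefl :: "path \<Rightarrow> path" where
  "prefl p = (\<sigma> (fst p), map arefl (snd p))"

lemma walk_prefl: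
  assumes "\<forall>a\<in>set as. aidx a < n" "walk_ok n v as"
  shows "walk_ok n (\<sigma> v) (map arefl as) \<and> walk_end n (\<sigma> v) (map arefl as) = \<sigma> (walk_end n v as)"
  using assms by (induction as arbitrary: v) (auto simp: asrc_arefl atgt_arefl)

lemma valid_path_prefl: "valid_path n p \<Longrightarrow> valid_path n (prefl p)"
  by (auto simp: valid_path_def prefl_def walk_prefl)

lemma walk_end_prefl:
  "valid_path n p \<Longrightarrow> walk_end n (fst (prefl p)) (snd (prefl p)) = \<sigma> (walk_end n (fst p) (snd p))"
  by (auto simp: valid_path_def prefl_def walk_prefl)

lemma prefl_prefl [simp]: "valid_path n p \<Longrightarrow> prefl (prefl p) = p"
  by (cases p) (auto simp: valid_path_def prefl_def map_idI)

lemma prefl_eq_iff: "valid_path n p \<Longrightarrow> valid_path n p' \<Longrightarrow> prefl p = prefl p' \<longleftrightarrow> p = p'"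
  by (metis prefl_prefl)

end

section \<open>Consequences of the module algebra axioms\<close>

locale taft_action =
  fixes n r m :: nat and q :: "'k::field" and phi dlt :: "'k pel \<Rightarrow> 'k pel"
  assumes module_algebra: "taft_module_algebra n r m q phi dlt"
begin

lemma dlt_path_alg: "f \<in> path_alg n \<Longrightarrow> dlt f \<in> path_alg n"
  and phi_padd: "f \<in> path_alg n \<Longrightarrow> h \<in> path_alg n \<Longrightarrow> phi (padd f h) = padd (phi f) (phi h)"
  and dlt_padd: "f \<in> path_alg n \<Longrightarrow> h \<in> path_alg n \<Longrightarrow> dlt (padd f h) = padd (dlt f) (dlt h)"
  and phi_pscale: "f \<in> path_alg n \<Longrightarrow> phi (pscale c f) = pscale c (phi f)"
  and dlt_pscale: "f \<in> path_alg n \<Longrightarrow> dlt (pscale c f) = pscale c (dlt f)"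
  and phi_pmult: "f \<in> path_alg n \<Longrightarrow> h \<in> path_alg n \<Longrightarrow> phi (pmult n f h) = pmult n (phi f) (phi h)"
  and dlt_pmult: "f \<in> path_alg n \<Longrightarrow> h \<in> path_alg n \<Longrightarrow>
    dlt (pmult n f h) = padd (pmult n f (dlt h)) (pmult n (dlt f) (phi h))"
  and phi_dlt: "f \<in> path_alg n \<Longrightarrow> phi (dlt f) = pscale q (dlt (phi f))"
  and dlt_pow_r: "f \<in> path_alg n \<Longrightarrow> (dlt ^^ r) f = pzero"
  using module_algebra unfolding taft_module_algebra_def by blast+

lemma phi_pzero [simp]: "phi pzero = pzero"
  using phi_pscale[OF path_alg_pzero, of 0] by (simp add: pscale_def pzero_def)

lemma dlt_pzero [simp]: "dlt pzero = pzero"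
  using dlt_pscale[OF path_alg_pzero, of 0] by (simp add: pscale_def pzero_def)

lemma dlt_psub: "f \<in> path_alg n \<Longrightarrow> h \<in> path_alg n \<Longrightarrow> dlt (psub f h) = psub (dlt f) (dlt h)"
  by (simp add: psub_eq_padd_pscale dlt_padd dlt_pscale path_alg_pscale)

lemma dlt_basis_el_eq_pzero:
  assumes "\<And>v. v < n \<Longrightarrow> dlt (vtx v) = pzero" "\<And>a. aidx a < n \<Longrightarrow> dlt (arr n a) = pzero"
  shows "valid_path n (v, as) \<Longrightarrow> dlt (basis_el (v, as)) = pzero"
proof (induction as arbitrary: v)
  case Nil
  then show ?case using assms(1) by (simp add: vtx_def)
next
  case (Cons a as)
  have a: "aidx a < n" and tl: "valid_path n (atgt n a, as)"
    using Cons.prems valid_path_Cons_tl by (auto simp: valid_path_def)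
  have "dlt (basis_el (v, a # as)) = dlt (pmult n (arr n a) (basis_el (atgt n a, as)))"
    by (rule arg_cong[where f = dlt], rule basis_el_Cons[OF Cons.prems])
  also have "\<dots> = pzero"
    using dlt_pmult[OF path_alg_arr[OF a] path_alg_basis_el[OF tl]] Cons.IH[OF tl] assms(2)[OF a]
    by simp
  finally show ?case .
qed

lemma dlt_eq_pzero_if_generators:
  assumes "\<And>v. v < n \<Longrightarrow> dlt (vtx v) = pzero" "\<And>a. aidx a < n \<Longrightarrow> dlt (arr n a) = pzero"
    and f: "f \<in> path_alg n"
  shows "dlt f = pzero"
proof
  fix x
  have "dlt f x = (\<Sum>p | f p \<noteq> 0. f p * dlt (basis_el p) x)"
    by (rule path_alg_linear_expansion[OF dlt_padd dlt_pscale f])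
  also have "\<dots> = 0"
  proof (rule sum.neutral, rule ballI)
    fix p assume "p \<in> {p. f p \<noteq> 0}"
    then have "valid_path n p" using path_alg_valid[OF f] by simp
    then have "dlt (basis_el p) = pzero"
      using dlt_basis_el_eq_pzero[OF assms(1,2)] by (cases p) simp
    then show "f p * dlt (basis_el p) x = 0" by (simp add: pzero_apply)
  qed
  finally show "dlt f x = pzero x" by (simp add: pzero_apply)
qed

lemma dlt_generator_nonzero_if_inner_faithful:
  assumes "inner_faithful n r m q phi dlt" "1 < r" "0 < m"
  shows "(\<exists>v<n. dlt (vtx v) \<noteq> pzero) \<or> (\<exists>a. aidx a < n \<and> dlt (arr n a) \<noteq> pzero)"
proof (rule ccontr)
  assume "\<not> ?thesis"
  then have "dlt f = pzero" if "f \<in> path_alg n" for f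
    using dlt_eq_pzero_if_generators that by blast
  then have "\<forall>t\<in>x_ideal r m. \<forall>f\<in>path_alg n. tact r m phi dlt t f = pzero"
    by (simp add: tact_x_ideal)
  moreover have "tb (0, 1) \<in> (x_ideal r m :: 'k tel set)"
    using assms(2,3) by (rule x_in_x_ideal)
  ultimately show False
    using assms(1) hopf_ideal_x_ideal[OF assms(3)] tb_nonzero
    unfolding inner_faithful_def by blast
qed

end

section \<open>Actions by a reflection\<close>

locale taft_reflection = reflection_indices n d + taft_action n r m q phi dlt
  for n d r m :: nat and q :: "'k::field" and phi dlt :: "'k pel \<Rightarrow> 'k pel" +
  fixes mu mus :: "nat \<Rightarrow> 'k"
  assumes primitive: "primitive_root r q" and r_gt_1: "1 < r"
    and linear: "linear_x_action n dlt"
    and coeff_nonzero: "\<forall>i<n. mu i \<noteq> 0 \<and> mus i \<noteq> 0"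
    and phi_on_vtx: "\<forall>i<n. phi (vtx i) = vtx ((2 * n - (d + i)) mod n)"
    and phi_on_Fw: "\<forall>i<n. phi (arr n (Fw i)) = pscale (mu i) (arr n (Bw ((2 * n - (d + i + 1)) mod n)))"
    and phi_on_Bw: "\<forall>i<n. phi (arr n (Bw i)) = pscale (mus i) (arr n (Fw ((2 * n - (d + i + 1)) mod n)))"
    and descends: "descends n phi dlt"
begin

primrec acoef :: "arrow \<Rightarrow> 'k" where
  "acoef (Fw i) = mu i"
| "acoef (Bw i) = mus i"

definition pcoef :: "path \<Rightarrow> 'k" where
  "pcoef p = prod_list (map acoef (snd p))"

lemma acoef_nonzero: "aidx a < n \<Longrightarrow> acoef a \<noteq> 0"
  using coeff_nonzero by (cases a) auto

lemma pcoef_nonzero: "valid_path n p \<Longrightarrow> pcoef p \<noteq> 0"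
  by (auto simp: pcoef_def valid_path_def prod_list_zero_iff acoef_nonzero)

lemma phi_vtx: "v < n \<Longrightarrow> phi (vtx v) = vtx (\<sigma> v)"
  using phi_on_vtx by (simp add: \<sigma>_def)

lemma phi_arr: "aidx a < n \<Longrightarrow> phi (arr n a) = pscale (acoef a) (arr n (arefl a))"
  using phi_on_Fw phi_on_Bw by (cases a) (simp_all add: \<tau>_def)

lemma phi_basis_el:
  "valid_path n (v, as) \<Longrightarrow> phi (basis_el (v, as)) = pscale (pcoef (v, as)) (basis_el (prefl (v, as)))"
proof (induction as arbitrary: v)
  case Nil
  then show ?case
    by (simp add: phi_vtx[unfolded vtx_def] pcoef_def prefl_def fun_eq_iff)
next
  case (Cons a as)
  have a: "aidx a < n" and tl: "valid_path n (atgt n a, as)"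
    using Cons.prems valid_path_Cons_tl by (auto simp: valid_path_def)
  have "valid_path n (\<sigma> v, arefl a # map arefl as)"
    using valid_path_prefl[OF Cons.prems] by (simp add: prefl_def)
  then have "(basis_el (\<sigma> v, arefl a # map arefl as) :: 'k pel)
      = pmult n (arr n (arefl a)) (basis_el (atgt n (arefl a), map arefl as))"
    by (rule basis_el_Cons)
  then have "basis_el (prefl (v, a # as))
      = (pmult n (arr n (arefl a)) (basis_el (prefl (atgt n a, as))) :: 'k pel)"
    using a by (simp add: atgt_arefl prefl_def)
  moreover have "pcoef (v, a # as) = acoef a * pcoef (atgt n a, as)"
    by (simp add: pcoef_def)
  moreover have "phi (basis_el (v, a # as)) = pmult n (phi (arr n a)) (phi (basis_el (atgt n a, as)))"
    by (subst basis_el_Cons[OF Cons.prems]) (rule phi_pmult[OF path_alg_arr[OF a] path_alg_basis_el[OF tl]])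
  then have "phi (basis_el (v, a # as)) = pmult n (pscale (acoef a) (arr n (arefl a)))
      (pscale (pcoef (atgt n a, as)) (basis_el (prefl (atgt n a, as))))"
    by (simp only: phi_arr[OF a] Cons.IH[OF tl])
  then have "phi (basis_el (v, a # as)) = pscale (pcoef (atgt n a, as)) (pscale (acoef a)
      (pmult n (arr n (arefl a)) (basis_el (prefl (atgt n a, as)))))"
    by (simp only: pmult_pscale_left pmult_pscale_right)
  ultimately show ?case
    by (simp add: fun_eq_iff mult.assoc)
qed

lemma phi_apply_prefl:
  assumes f: "f \<in> path_alg n" and p: "valid_path n p"
  shows "phi f (prefl p) = pcoef p * f p"
proof -
  have "phi f (prefl p) = (\<Sum>p' | f p' \<noteq> 0. f p' * phi (basis_el p') (prefl p))"
    by (rule path_alg_linear_expansion[OF phi_padd phi_pscale f])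
  also have "\<dots> = (\<Sum>p' | f p' \<noteq> 0. if p = p' then f p' * pcoef p' else 0)"
  proof (rule sum.cong)
    fix p' assume "p' \<in> {p'. f p' \<noteq> 0}"
    then have p': "valid_path n p'" using path_alg_valid[OF f] by simp
    then have "phi (basis_el p') = pscale (pcoef p') (basis_el (prefl p'))"
      using phi_basis_el[of "fst p'" "snd p'"] by simp
    then have "phi (basis_el p') (prefl p) = (if p = p' then pcoef p' else 0)"
      using prefl_eq_iff[OF p p'] by (simp add: basis_el_def)
    then show "f p' * phi (basis_el p') (prefl p) = (if p = p' then f p' * pcoef p' else 0)"
      by simp
  qed simp
  also have "\<dots> = pcoef p * f p"
    by (simp add: sum.delta'[OF path_alg_finite_support[OF f]])
  finally show ?thesis .
qed

lemma dlt_apply_reflect: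
  "f \<in> path_alg n \<Longrightarrow> valid_path n p \<Longrightarrow> pcoef p * dlt f p = q * dlt (phi f) (prefl p)"
  using phi_apply_prefl[OF dlt_path_alg] phi_dlt by simp

lemma dlt_arr_reflect:
  "aidx a < n \<Longrightarrow> valid_path n p \<Longrightarrow>
     pcoef p * dlt (arr n a) p = q * acoef a * dlt (arr n (arefl a)) (prefl p)"
  using dlt_apply_reflect[OF path_alg_arr] by (simp add: phi_arr dlt_pscale path_alg_arr)

lemma dlt_vtx_long: "v < n \<Longrightarrow> dlt (vtx v) (w, b # bs) = 0"
  using linear unfolding linear_x_action_def by fastforce

lemma dlt_arr_long: "aidx a < n \<Longrightarrow> dlt (arr n a) (w, b # c # cs) = 0"
  using linear unfolding linear_x_action_def by fastforce

definition \<gamma> :: "nat \<Rightarrow> 'k" where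
  "\<gamma> v = dlt (vtx v) (v, [])"

lemma dlt_vtx_Nil:
  assumes v: "v < n" and w: "w < n"
  shows "dlt (vtx v) (w, []) = (if w = v then dlt (vtx v) (w, []) else 0)
    + (if w = \<sigma> v then dlt (vtx v) (w, []) else 0)"
proof -
  have "dlt (vtx v) = dlt (pmult n (vtx v) (vtx v))"
    using v by (simp add: pmult_vtx_vtx)
  also have "\<dots> = padd (pmult n (vtx v) (dlt (vtx v))) (pmult n (dlt (vtx v)) (vtx (\<sigma> v)))"
    using v by (simp add: dlt_pmult path_alg_vtx phi_vtx)
  finally have "dlt (vtx v) (w, []) = pmult n (vtx v) (dlt (vtx v)) (w, [])
      + pmult n (dlt (vtx v)) (vtx (\<sigma> v)) (w, [])"
    by (metis padd_apply)
  also have "pmult n (vtx v) (dlt (vtx v)) (w, []) = (if w = v then dlt (vtx v) (w, []) else 0)"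
    using w by (simp add: pmult_vtx_left)
  also have "pmult n (dlt (vtx v)) (vtx (\<sigma> v)) (w, []) = (if w = \<sigma> v then dlt (vtx v) (w, []) else 0)"
    using w by (simp add: pmult_vtx_right)
  finally show ?thesis .
qed

lemma \<gamma>_fixed:
  assumes "v < n" "\<sigma> v = v"
  shows "\<gamma> v = 0"
proof -
  have "\<gamma> v = \<gamma> v + \<gamma> v"
    using dlt_vtx_Nil[OF assms(1) assms(1)] assms(2) unfolding \<gamma>_def by (simp only: simp_thms if_True)
  then show ?thesis by (metis add_cancel_right_right)
qed

lemma dlt_vtx_at_\<sigma>: "v < n \<Longrightarrow> dlt (vtx v) (\<sigma> v, []) = - \<gamma> (\<sigma> v)"
proof (cases "\<sigma> v = v")
  case True
  assume "v < n"
  then show ?thesis using True \<gamma>_fixed by (simp add: \<gamma>_def)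
next
  case False
  assume v: "v < n"
  have "pzero = dlt (pmult n (vtx (\<sigma> v)) (vtx v))"
    using False by (simp add: pmult_vtx_vtx)
  also have "\<dots> = padd (pmult n (vtx (\<sigma> v)) (dlt (vtx v))) (pmult n (dlt (vtx (\<sigma> v))) (vtx (\<sigma> v)))"
    using v by (simp add: dlt_pmult path_alg_vtx phi_vtx)
  finally have "0 = dlt (vtx v) (\<sigma> v, []) + \<gamma> (\<sigma> v)"
    by (auto simp: pmult_vtx_left pmult_vtx_right \<gamma>_def pzero_apply dest: fun_cong[where x = "(\<sigma> v, [])"])
  then show ?thesis by (simp add: eq_neg_iff_add_eq_0)
qed

lemma dlt_vtx_apply:
  assumes v: "v < n"
  shows "dlt (vtx v) p = (if p = (v, []) then \<gamma> v else 0) - (if p = (\<sigma> v, []) then \<gamma> (\<sigma> v) else 0)"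
proof (cases p rule: path_cases[of n])
  case invalid
  then show ?thesis
    using v path_alg_invalid_zero[OF dlt_path_alg[OF path_alg_vtx[OF v]]] by auto
next
  case (Nil w)
  show ?thesis
  proof (cases "\<sigma> v = v")
    case True
    then show ?thesis using Nil v dlt_vtx_Nil[of v w] \<gamma>_fixed by (auto simp: \<gamma>_def)
  next
    case False
    then show ?thesis using Nil v dlt_vtx_Nil[of v w] dlt_vtx_at_\<sigma> by (auto simp: \<gamma>_def)
  qed
qed (use v dlt_vtx_long in auto)

lemma \<gamma>_\<sigma>: "v < n \<Longrightarrow> \<gamma> (\<sigma> v) = q * \<gamma> v"
  using dlt_apply_reflect[OF path_alg_vtx, of v "(\<sigma> v, [])"]
    dlt_vtx_apply[of v "(\<sigma> v, [])"] dlt_vtx_apply[of "\<sigma> v" "(v, [])"] \<gamma>_fixed[of v]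
  by (cases "\<sigma> v = v") (auto simp: phi_vtx pcoef_def prefl_def)

lemma dlt_arr_via_src:
  assumes a: "aidx a < n"
  shows "dlt (arr n a) = padd (pmult n (vtx (asrc n a)) (dlt (arr n a)))
    (pmult n (dlt (vtx (asrc n a))) (pscale (acoef a) (arr n (arefl a))))"
proof -
  have "dlt (arr n a) = dlt (pmult n (vtx (asrc n a)) (arr n a))"
    using a by (simp add: pmult_vtx_arr)
  then show ?thesis
    using a by (simp add: dlt_pmult path_alg_vtx path_alg_arr asrc_less phi_arr)
qed

lemma dlt_arr_via_tgt:
  assumes a: "aidx a < n"
  shows "dlt (arr n a) = padd (pmult n (arr n a) (dlt (vtx (atgt n a))))
    (pmult n (dlt (arr n a)) (vtx (\<sigma> (atgt n a))))"
proof -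
  have "dlt (arr n a) = dlt (pmult n (arr n a) (vtx (atgt n a)))"
    using a by (simp add: pmult_arr_vtx)
  then show ?thesis
    using a by (simp add: dlt_pmult path_alg_vtx path_alg_arr atgt_less phi_vtx)
qed

text \<open>The coefficients of the x-action on an arrow that the module algebra axioms leave
  undetermined sit on the paths of length at most one from its source to the reflection
  of its target.\<close>

definition free_pos :: "arrow \<Rightarrow> path \<Rightarrow> bool" where
  "free_pos a p \<longleftrightarrow> valid_path n p \<and> length (snd p) \<le> 1 \<and> fst p = asrc n a
     \<and> walk_end n (fst p) (snd p) = \<sigma> (atgt n a)"

lemma dlt_arr_apply:
  assumes a: "aidx a < n" and nf: "\<not> free_pos a p"
  shows "dlt (arr n a) p = (if p = (asrc n a, [a]) then \<gamma> (atgt n a) else 0)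
    - (if p = (\<sigma> (asrc n a), [arefl a]) then \<gamma> (\<sigma> (asrc n a)) * acoef a else 0)"
proof -
  let ?s = "asrc n a" and ?t = "atgt n a" and ?X = "dlt (arr n a)"
  have s: "?s < n" and t: "?t < n" using a asrc_less atgt_less by auto
  have src: "?X (w, bs) = pmult n (vtx ?s) ?X (w, bs)
      + pmult n (dlt (vtx ?s)) (pscale (acoef a) (arr n (arefl a))) (w, bs)" for w bs
    using dlt_arr_via_src[OF a] by (metis padd_apply)
  have tgt: "?X (w, bs) = pmult n (arr n a) (dlt (vtx ?t)) (w, bs)
      + pmult n ?X (vtx (\<sigma> ?t)) (w, bs)" for w bs
    using dlt_arr_via_tgt[OF a] by (metis padd_apply)
  have src_Nil: "?X (w, []) = 0" if "w \<noteq> ?s" for w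
  proof -
    have "?X (w, []) = pmult n (vtx ?s) ?X (w, [])
        + pmult n (dlt (vtx ?s)) (pscale (acoef a) (arr n (arefl a))) (w, [])"
      by (rule src)
    also have "\<dots> = 0" using that by (simp add: pmult_Nil vtx_apply arr_apply)
    finally show ?thesis .
  qed
  have tgt_Nil: "?X (w, []) = 0" if "w \<noteq> \<sigma> ?t" for w
  proof -
    have "?X (w, []) = pmult n (arr n a) (dlt (vtx ?t)) (w, []) + pmult n ?X (vtx (\<sigma> ?t)) (w, [])"
      by (rule tgt)
    also have "\<dots> = 0" using that by (simp add: pmult_Nil vtx_apply arr_apply)
    finally show ?thesis .
  qed
  have src_single: "?X (w, [b]) = dlt (vtx ?s) (w, []) * (acoef a * arr n (arefl a) (w, [b]))"
    if "w \<noteq> ?s" "valid_path n (w, [b])" for w b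
  proof -
    have "?X (w, [b]) = pmult n (vtx ?s) ?X (w, [b])
        + pmult n (dlt (vtx ?s)) (pscale (acoef a) (arr n (arefl a))) (w, [b])"
      by (rule src)
    also have "\<dots> = dlt (vtx ?s) (w, []) * (acoef a * arr n (arefl a) (w, [b]))"
      using that s by (simp add: vtx_apply pmult_single arr_apply dlt_vtx_long
          del: valid_path_single)
    finally show ?thesis .
  qed
  have tgt_single: "?X (w, [b]) = (if (w, [b]) = (?s, [a]) then \<gamma> ?t else 0)"
    if "atgt n b \<noteq> \<sigma> ?t" "valid_path n (w, [b])" for w b
  proof -
    have "?X (w, [b]) = pmult n (arr n a) (dlt (vtx ?t)) (w, [b]) + pmult n ?X (vtx (\<sigma> ?t)) (w, [b])"
      by (rule tgt)
    also have "\<dots> = (if (w, [b]) = (?s, [a]) then \<gamma> ?t else 0)"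
      using that by (auto simp: vtx_apply pmult_single arr_apply \<gamma>_def simp del: valid_path_single)
    finally show ?thesis .
  qed
  show ?thesis
  proof (cases p rule: path_cases[of n])
    case invalid
    then show ?thesis
      using a s path_alg_invalid_zero[OF dlt_path_alg[OF path_alg_arr[OF a]]]
      by (auto simp: asrc_arefl)
  next
    case (Nil w)
    then have "w \<noteq> ?s \<or> w \<noteq> \<sigma> ?t" using nf by (simp add: free_pos_def)
    then have "?X (w, []) = 0" using src_Nil tgt_Nil by blast
    then show ?thesis using Nil by simp
  next
    case (single w b)
    then have "w \<noteq> ?s \<or> atgt n b \<noteq> \<sigma> ?t" using nf by (simp add: free_pos_def)
    then show ?thesis
    proof
      assume "w \<noteq> ?s"
      then show ?thesis
        using src_single[OF _ single(2)] single(1) s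
        by (auto simp: arr_apply dlt_vtx_apply asrc_arefl a)
    next
      assume "atgt n b \<noteq> \<sigma> ?t"
      moreover have "\<gamma> (\<sigma> ?s) = 0" if "p = (\<sigma> ?s, [arefl a])" "w = ?s"
        using that single(1) \<gamma>_fixed[OF s] by auto
      ultimately show ?thesis
        using tgt_single[OF _ single(2)] single(1) src_single[OF _ single(2)]
        by (cases "w = ?s") (auto simp: arr_apply dlt_vtx_apply[OF s] asrc_arefl a)
    qed
  qed (use a dlt_arr_long in auto)
qed

lemma dlt_arr_eq_if_free_zero:
  assumes a: "aidx a < n" and free: "\<And>p. free_pos a p \<Longrightarrow> dlt (arr n a) p = 0"
  shows "dlt (arr n a) = psub (pscale (\<gamma> (atgt n a)) (arr n a))
    (pscale (\<gamma> (\<sigma> (asrc n a)) * acoef a) (arr n (arefl a)))"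
proof
  fix p
  show "dlt (arr n a) p = psub (pscale (\<gamma> (atgt n a)) (arr n a))
    (pscale (\<gamma> (\<sigma> (asrc n a)) * acoef a) (arr n (arefl a))) p"
  proof (cases "free_pos a p")
    case True
    then have "p = (asrc n a, [a]) \<Longrightarrow> \<gamma> (atgt n a) = 0"
      and "p = (\<sigma> (asrc n a), [arefl a]) \<Longrightarrow> \<gamma> (\<sigma> (asrc n a)) = 0"
      using a \<gamma>_fixed[OF atgt_less[OF a]] \<gamma>_fixed[OF asrc_less[OF a]]
      by (auto simp: free_pos_def asrc_arefl)
    then show ?thesis using free[OF True] a by (auto simp: arr_apply asrc_arefl)
  next
    case False
    then show ?thesis using dlt_arr_apply[OF a False] a by (auto simp: arr_apply asrc_arefl)
  qed
qed

lemma free_pos_reflect: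
  assumes a: "aidx a < n" and free: "free_pos a p"
  shows "free_pos (arefl a) (prefl p)"
proof -
  have "valid_path n p" using free by (simp add: free_pos_def)
  then have "valid_path n (prefl p)"
    and "walk_end n (fst (prefl p)) (snd (prefl p)) = \<sigma> (walk_end n (fst p) (snd p))"
    by (simp_all add: valid_path_prefl walk_end_prefl)
  then show ?thesis
    using a free by (auto simp: free_pos_def asrc_arefl atgt_arefl atgt_less prefl_def)
qed

lemma dlt_arr_reflect_nonzero:
  "aidx a < n \<Longrightarrow> valid_path n p \<Longrightarrow> dlt (arr n a) p \<noteq> 0 \<Longrightarrow> dlt (arr n (arefl a)) (prefl p) \<noteq> 0"
  using dlt_arr_reflect[of a p] pcoef_nonzero[of p] by auto

lemma dlt_rho_in_preproj_hull: "i < n \<Longrightarrow> dlt (rho n i) \<in> preproj_hull n"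
  and phi_rho_in_preproj_hull: "i < n \<Longrightarrow> phi (rho n i) \<in> preproj_hull n"
  using descends rho_in_Omega Omega_subset_preproj_hull unfolding descends_def by blast+

lemma dlt_rho: "i < n \<Longrightarrow> dlt (rho n i) =
  psub (padd (pmult n (arr n (Bw i)) (dlt (arr n (Fw i))))
             (pmult n (dlt (arr n (Bw i))) (pscale (mu i) (arr n (Bw (\<tau> i))))))
       (padd (pmult n (arr n (Fw (nxt n i))) (dlt (arr n (Bw (nxt n i)))))
             (pmult n (dlt (arr n (Fw (nxt n i)))) (pscale (mus (nxt n i)) (arr n (Fw (\<tau> (nxt n i)))))))"
  unfolding rho_def
  by (simp add: dlt_psub path_alg_pmult path_alg_arr dlt_pmult phi_arr)

lemma mu_mus_nxt: "i < n \<Longrightarrow> mu (nxt n i) * mus (nxt n i) = mu i * mus i"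
proof -
  assume i: "i < n"
  let ?p1 = "(nxt n i, [Bw i, Fw i])" and ?p2 = "(nxt n i, [Fw (nxt n i), Bw (nxt n i)])"
  have valid: "valid_path n ?p1" "valid_path n ?p2"
    using i by auto
  have "prefl ?p1 = (\<tau> i, [Fw (\<tau> i), Bw (\<tau> i)])"
    and "prefl ?p2 = (\<tau> i, [Bw (prv n (\<tau> i)), Fw (prv n (\<tau> i))])"
    using i by (simp_all add: prefl_def \<tau>_eq_\<sigma>_nxt[symmetric] \<tau>_nxt)
  moreover have "rho n i ?p1 = (1 :: 'k)" "rho n i ?p2 = (-1 :: 'k)"
    using i by (simp_all add: rho_eq_basis basis_el_def)
  ultimately have "phi (rho n i) (\<tau> i, [Fw (\<tau> i), Bw (\<tau> i)]) = mus i * mu i"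
    and "phi (rho n i) (\<tau> i, [Bw (prv n (\<tau> i)), Fw (prv n (\<tau> i))]) = - (mu (nxt n i) * mus (nxt n i))"
    using phi_apply_prefl[OF path_alg_rho valid(1)] phi_apply_prefl[OF path_alg_rho valid(2)] i
    by (simp_all add: pcoef_def)
  moreover have "phi (rho n i) (\<tau> i, [Bw (prv n (\<tau> i)), Fw (prv n (\<tau> i))])
      + phi (rho n i) (\<tau> i, [Fw (\<tau> i), Bw (\<tau> i)]) = 0"
    using phi_rho_in_preproj_hull[OF i] by (simp add: preproj_hull_def)
  ultimately show ?thesis by (simp add: mult.commute)
qed

lemma mu_mus_eq: "i < n \<Longrightarrow> mu i * mus i = mu 0 * mus 0"
proof (induction i)
  case (Suc i)
  then have "Suc i < n" "i < n" by simp_all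
  then show ?case using Suc.IH mu_mus_nxt[of i] by (simp only: mod_less)
qed simp

lemma q_ne_1: "q \<noteq> 1"
  using primitive r_gt_1 unfolding primitive_root_def by (metis power_one_right zero_less_one)

lemma q_eq_minus_1_if_sq: "q * q = 1 \<Longrightarrow> q = -1"
proof -
  assume "q * q = 1"
  then have "(q - 1) * (q + 1) = 0" by (simp add: algebra_simps)
  then show ?thesis using q_ne_1 by (simp add: eq_neg_iff_add_eq_0)
qed

lemma r_eq_2_if_q_eq_minus_1:
  assumes "q = -1"
  shows "r = 2"
proof (rule ccontr)
  assume "r \<noteq> 2"
  then have "q ^ 2 \<noteq> 1" using primitive r_gt_1 unfolding primitive_root_def by simp
  then show False using assms by simp
qed

lemma symmetric_edge_case:
  assumes i: "i < n" and edge: "\<sigma> (nxt n i) = i" and nz: "dlt (arr n (Fw i)) (i, []) \<noteq> 0"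
  shows "q = -1 \<and> mu i * mus i = 1"
proof -
  define x0 where "x0 = dlt (arr n (Fw i)) (i, [])"
  define y0 where "y0 = dlt (arr n (Bw i)) (nxt n i, [])"
  have \<tau>i: "\<tau> i = i" using i edge by (simp add: \<tau>_eq_\<sigma>_nxt)
  have \<sigma>i: "\<sigma> i = nxt n i" using \<sigma>_\<sigma>[of "nxt n i"] edge n_pos by simp
  have E1: "x0 = q * mu i * y0"
    using dlt_arr_reflect[of "Fw i" "(i, [])"] i \<tau>i \<sigma>i
    by (simp add: x0_def y0_def pcoef_def prefl_def)
  have E2: "y0 = q * mus i * x0"
    using dlt_arr_reflect[of "Bw i" "(nxt n i, [])"] i \<tau>i edge n_pos
    by (simp add: x0_def y0_def pcoef_def prefl_def)
  have "dlt (rho n i) (nxt n i, [Bw i]) = 0"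
    using dlt_rho_in_preproj_hull[OF i] by (simp add: preproj_hull_def)
  then have E3: "x0 + mu i * y0 = 0"
    using i \<tau>i n_pos by (simp add: dlt_rho pmult_single arr_apply x0_def y0_def mult.commute)
  have "y0 \<noteq> 0" using nz E3 by (auto simp: x0_def)
  moreover have "(q + 1) * (mu i * y0) = 0" using E1 E3 by (simp add: algebra_simps)
  ultimately have q: "q = -1"
    using coeff_nonzero i by (simp add: eq_neg_iff_add_eq_0)
  have "y0 = - (mus i * x0)" using E2 q by simp
  also have "x0 = - (mu i * y0)" using E1 q by simp
  finally have "y0 = (mu i * mus i) * y0" by (simp add: algebra_simps)
  then show ?thesis using q \<open>y0 \<noteq> 0\<close> by (metis mult_cancel_right2)
qed

lemma symmetric_vertex_case:
  assumes k: "k < n" and fixed: "\<sigma> k = k"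
    and nz: "dlt (arr n (Fw (prv n k))) (prv n k, [Fw (prv n k)]) \<noteq> 0 \<or> dlt (arr n (Fw k)) (k, [Bw (prv n k)]) \<noteq> 0"
  shows "q = -1 \<and> mu k * mus k = 1"
proof -
  define j where "j = prv n k"
  have j: "j < n" "j \<noteq> k" "nxt n j = k"
    using k n_pos prv_ne by (simp_all add: j_def prv_less nxt_prv)
  have \<tau>j: "\<tau> j = k" using j k fixed by (simp add: \<tau>_eq_\<sigma>_nxt)
  have \<sigma>j: "\<sigma> j = nxt n k" using j \<sigma>_eq_nxt_\<tau>[of j] \<tau>j by simp
  have \<sigma>k1: "\<sigma> (nxt n k) = j" using \<sigma>j \<sigma>_\<sigma>[OF j(1)] by simp
  have \<tau>k: "\<tau> k = j" using k \<sigma>k1 by (simp add: \<tau>_eq_\<sigma>_nxt)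
  define P where "P = dlt (arr n (Fw j)) (j, [Fw j])"
  define P' where "P' = dlt (arr n (Bw j)) (k, [Fw k])"
  define S where "S = dlt (arr n (Fw k)) (k, [Bw j])"
  define S' where "S' = dlt (arr n (Bw k)) (nxt n k, [Bw k])"
  have C1: "P = q * S'"
    using dlt_arr_reflect[of "Fw j" "(j, [Fw j])"] j \<tau>j \<sigma>j coeff_nonzero
    by (simp add: P_def S'_def pcoef_def prefl_def)
  have C2: "S' = q * P"
    using dlt_arr_reflect[of "Bw k" "(nxt n k, [Bw k])"] k \<tau>k \<sigma>k1 coeff_nonzero n_pos
    by (simp add: P_def S'_def pcoef_def prefl_def)
  have C3: "mu k * P' = q * mus j * S"
    using dlt_arr_reflect[of "Bw j" "(k, [Fw k])"] j k \<tau>j \<tau>k fixed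
    by (simp add: P'_def S_def pcoef_def prefl_def)
  have "dlt (rho n k) (nxt n k, [Bw k, Bw j]) = 0"
    using dlt_rho_in_preproj_hull[OF k] by (simp add: preproj_hull_def)
  then have C4: "S + mu k * S' = 0"
    using k j \<tau>k dlt_arr_long
    by (simp add: dlt_rho pmult_pair arr_apply S_def S'_def mult.commute)
  have "dlt (rho n j) (k, [Bw (prv n k), Fw (prv n k)]) + dlt (rho n j) (k, [Fw k, Bw k]) = 0"
    using dlt_rho_in_preproj_hull[OF j(1)] k by (simp add: preproj_hull_def)
  then have C5: "(P - mus k * S) + (mu j * P' - S') = 0"
    using k j \<tau>k \<tau>j dlt_arr_long
    by (simp add: dlt_rho pmult_pair arr_apply P_def P'_def S_def S'_def j_def[symmetric] mult.commute)
  have P: "P \<noteq> 0"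
    using nz C1 C2 C4 by (auto simp: P_def S_def j_def)
  then have "q * q = 1" using C1 C2 by (metis mult.assoc mult_cancel_right2)
  then have q: "q = -1" by (rule q_eq_minus_1_if_sq)
  have two: "(2 :: 'k) \<noteq> 0"
    using q_ne_1 q by (metis add_eq_0_iff one_add_one)
  have "S' = - P" using C2 q by simp
  moreover have "S = mu k * P" using C4 \<open>S' = - P\<close> by (simp add: eq_neg_iff_add_eq_0)
  moreover have "mu k * P' = mu k * - (mus j * P)"
    using C3 \<open>S = mu k * P\<close> q by (simp add: algebra_simps)
  then have "P' = - (mus j * P)"
    using acoef_nonzero[of "Fw k"] k by (metis acoef.simps(1) aidx.simps(1) mult_left_cancel)
  ultimately have "2 * P * (1 - mu k * mus k) = 0"
    using C5 mu_mus_eq[OF j(1)] mu_mus_eq[OF k] by (simp add: algebra_simps)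
  then show ?thesis using P two q by simp
qed

lemma mu_mus_eq_1_everywhere: "i < n \<Longrightarrow> mu i * mus i = 1 \<Longrightarrow> \<forall>j<n. mu j * mus j = 1"
  using mu_mus_eq by metis

lemma free_Fw_nonzero:
  assumes i: "i < n" and free: "free_pos (Fw i) p" and nz: "dlt (arr n (Fw i)) p \<noteq> 0"
  shows "q = -1 \<and> (\<forall>j<n. mu j * mus j = 1)"
proof -
  have p: "valid_path n p" "length (snd p) \<le> 1" "fst p = i" "walk_end n i (snd p) = \<sigma> (nxt n i)"
    using free by (auto simp: free_pos_def)
  consider "snd p = []" | b where "snd p = [b]"
    using p(2) by (cases "snd p") auto
  then obtain k where "k < n" "q = -1 \<and> mu k * mus k = 1"
  proof cases
    case 1
    then have "p = (i, [])" "\<sigma> (nxt n i) = i" using p by (auto simp: prod_eq_iff)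
    then show ?thesis using symmetric_edge_case[OF i] nz that i by simp
  next
    case (2 b)
    then have b: "p = (i, [b])" "aidx b < n" "asrc n b = i" "atgt n b = \<sigma> (nxt n i)"
      using p by (auto simp: prod_eq_iff valid_path_def)
    show ?thesis
    proof (cases b)
      case (Fw j)
      then have "\<sigma> (nxt n i) = nxt n i" "prv n (nxt n i) = i" "j = i"
        using b i by (simp_all add: prv_nxt)
      then have "q = -1 \<and> mu (nxt n i) * mus (nxt n i) = 1"
        using symmetric_vertex_case[of "nxt n i"] nz b Fw n_pos by simp
      then show ?thesis using that[of "nxt n i"] n_pos by fastforce
    next
      case (Bw j)
      then have "prv n i = j" using b prv_nxt[of j n] by simp
      moreover have "\<tau> i = j" using b Bw i by (simp add: \<tau>_eq_\<sigma>_nxt)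
      ultimately have "\<sigma> i = i" using i \<sigma>_eq_nxt_\<tau>[OF i] nxt_prv[OF i] by simp
      then have "q = -1 \<and> mu i * mus i = 1"
        using symmetric_vertex_case[OF i] nz b Bw \<open>prv n i = j\<close> by simp
      then show ?thesis using that i by blast
    qed
  qed
  then show ?thesis using mu_mus_eq_1_everywhere by blast
qed

lemma free_nonzero:
  assumes a: "aidx a < n" and free: "free_pos a p" and nz: "dlt (arr n a) p \<noteq> 0"
  shows "q = -1 \<and> (\<forall>j<n. mu j * mus j = 1)"
proof (cases a)
  case (Fw i)
  then show ?thesis using free_Fw_nonzero a free nz by simp
next
  case (Bw i)
  have "valid_path n p" using free by (simp add: free_pos_def)
  then have "free_pos (Fw (\<tau> i)) (prefl p)" "dlt (arr n (Fw (\<tau> i))) (prefl p) \<noteq> 0"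
    using free_pos_reflect[OF a free] dlt_arr_reflect_nonzero[OF a _ nz] Bw by simp_all
  then show ?thesis by (rule free_Fw_nonzero[OF \<tau>_less])
qed

lemma arefl_ne: "arefl a \<noteq> a"
  by (cases a) simp_all

lemma \<gamma>_tgt_sq:
  assumes q: "q = -1" and a: "aidx a < n"
    and free: "\<And>b p. aidx b < n \<Longrightarrow> free_pos b p \<Longrightarrow> dlt (arr n b) p = 0"
  shows "\<gamma> (atgt n a) * \<gamma> (atgt n a) = \<gamma> (asrc n a) * \<gamma> (asrc n a) * (acoef a * acoef (arefl a))"
proof -
  let ?s = "asrc n a" and ?t = "atgt n a"
  have s: "?s < n" using a asrc_less by blast
  have closed: "dlt (arr n b) = psub (pscale (\<gamma> (atgt n b)) (arr n b))
      (pscale (\<gamma> (\<sigma> (asrc n b)) * acoef b) (arr n (arefl b)))" if "aidx b < n" for b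
    using dlt_arr_eq_if_free_zero[OF that free[OF that]] .
  have "dlt (dlt (arr n a)) = pzero"
    using dlt_pow_r[OF path_alg_arr[OF a]] r_eq_2_if_q_eq_minus_1[OF q] by (simp add: numeral_2_eq_2)
  moreover have "dlt (dlt (arr n a)) = psub (pscale (\<gamma> ?t) (dlt (arr n a)))
      (pscale (\<gamma> (\<sigma> ?s) * acoef a) (dlt (arr n (arefl a))))"
    by (subst closed[OF a]) (simp add: dlt_psub dlt_pscale path_alg_pscale path_alg_arr a)
  ultimately have "\<gamma> ?t * dlt (arr n a) (?s, [a]) - \<gamma> (\<sigma> ?s) * acoef a * dlt (arr n (arefl a)) (?s, [a]) = 0"
    by (metis psub_apply pscale_apply pzero_apply)
  moreover have "dlt (arr n a) (?s, [a]) = \<gamma> ?t"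
    using closed[OF a] arefl_ne[of a] by (simp add: arr_apply)
  moreover have "dlt (arr n (arefl a)) (?s, [a]) = - (\<gamma> ?s * acoef (arefl a))"
    using closed[of "arefl a"] a s by (simp add: arr_apply asrc_arefl atgt_arefl arefl_ne[symmetric])
  moreover have "\<gamma> (\<sigma> ?s) = - \<gamma> ?s" using \<gamma>_\<sigma>[OF s] q by simp
  ultimately have "\<gamma> ?t * \<gamma> ?t = - \<gamma> ?s * acoef a * - (\<gamma> ?s * acoef (arefl a))"
    by (simp only: right_minus_eq)
  also have "\<dots> = \<gamma> ?s * \<gamma> ?s * (acoef a * acoef (arefl a))"
    by (simp only: mult_minus_left mult_minus_right minus_minus mult_ac)
  finally show ?thesis .
qed

lemma \<gamma>_nonzero_propagates:
  assumes q: "q = -1"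
    and free: "\<And>b p. aidx b < n \<Longrightarrow> free_pos b p \<Longrightarrow> dlt (arr n b) p = 0"
  shows "i < n \<Longrightarrow> \<gamma> i \<noteq> 0 \<longleftrightarrow> \<gamma> 0 \<noteq> 0"
proof (induction i)
  case (Suc i)
  have "\<gamma> (Suc i) * \<gamma> (Suc i) = \<gamma> i * \<gamma> i * (mu i * mus (\<tau> i))"
    using \<gamma>_tgt_sq[OF q _ free, of "Fw i"] Suc.prems by simp
  moreover have "mu i * mus (\<tau> i) \<noteq> 0"
    using coeff_nonzero Suc.prems by simp
  ultimately have "\<gamma> (Suc i) \<noteq> 0 \<longleftrightarrow> \<gamma> i \<noteq> 0" by auto
  then show ?case using Suc by simp
qed simp

theorem q_eq_minus_1_and_mu_mus_eq_1:
  assumes nz: "(\<exists>v<n. dlt (vtx v) \<noteq> pzero) \<or> (\<exists>a. aidx a < n \<and> dlt (arr n a) \<noteq> pzero)"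
  shows "q = -1 \<and> (\<forall>i<n. mu i * mus i = 1)"
proof (cases "\<exists>a p. aidx a < n \<and> free_pos a p \<and> dlt (arr n a) p \<noteq> 0")
  case True
  then show ?thesis using free_nonzero by blast
next
  case False
  then have free: "\<And>b p. aidx b < n \<Longrightarrow> free_pos b p \<Longrightarrow> dlt (arr n b) p = 0" by blast
  have "\<not> (\<forall>v<n. \<gamma> v = 0)"
  proof
    assume \<gamma>0: "\<forall>v<n. \<gamma> v = 0"
    have "dlt (vtx v) = pzero" if "v < n" for v
      using that \<gamma>0 by (simp add: fun_eq_iff dlt_vtx_apply pzero_apply)
    moreover have "dlt (arr n a) = pzero" if "aidx a < n" for a
      using that \<gamma>0 dlt_arr_eq_if_free_zero[OF that free] asrc_less atgt_less
      by (simp add: fun_eq_iff pzero_apply)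
    ultimately show False using nz by blast
  qed
  then obtain v where v: "v < n" "\<gamma> v \<noteq> 0" by blast
  have "\<gamma> v = q * q * \<gamma> v" using \<gamma>_\<sigma>[OF v(1)] \<gamma>_\<sigma>[OF \<sigma>_less[of v]] v by simp
  then have q: "q = -1" using v(2) q_eq_minus_1_if_sq by (metis mult_cancel_right2)
  have \<gamma>: "\<gamma> i \<noteq> 0" if "i < n" for i
    using \<gamma>_nonzero_propagates[OF q free] v that by blast
  from symmetric_vertex_or_edge_exists show ?thesis
  proof (elim disjE exE conjE)
    fix k assume "k < n" "\<sigma> k = k"
    then show ?thesis using \<gamma> \<gamma>_fixed by blast
  next
    fix i assume i: "i < n" and edge: "\<sigma> (nxt n i) = i"
    have "\<tau> i = i" using i edge by (simp add: \<tau>_eq_\<sigma>_nxt)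
    moreover have "\<gamma> (nxt n i) = - \<gamma> i"
      using \<gamma>_\<sigma>[OF i] q \<sigma>_\<sigma>[of "nxt n i"] edge n_pos by simp
    ultimately have "\<gamma> i * \<gamma> i * 1 = \<gamma> i * \<gamma> i * (mu i * mus i)"
      using \<gamma>_tgt_sq[OF q _ free, of "Fw i"] i by simp
    then have "mu i * mus i = 1" using \<gamma>[OF i] by simp
    then show ?thesis using q mu_mus_eq_1_everywhere[OF i] by blast
  qed
qed

end

theorem lemma3p14:
  fixes q :: "'k::field" and n r m d :: nat and mu mus :: "nat \<Rightarrow> 'k"
    and phi dlt :: "'k pel \<Rightarrow> 'k pel"
  assumes "r > 1" and "m > 0" and "r dvd m"
    and "primitive_root r q" and "of_nat r \<noteq> (0::'k)"
    and "n \<ge> 3"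
    and "taft_module_algebra n r m q phi dlt"
    and "linear_x_action n dlt"
    and "inner_faithful n r m q phi dlt"
    and "0 < d" and "d \<le> n - 1"
    and "\<forall>i<n. mu i \<noteq> 0 \<and> mus i \<noteq> 0"
    and "\<forall>i<n. phi (vtx i) = vtx ((2 * n - (d + i)) mod n)"
    and "\<forall>i<n. phi (arr n (Fw i)) = pscale (mu i) (arr n (Bw ((2 * n - (d + i + 1)) mod n)))"
    and "\<forall>i<n. phi (arr n (Bw i)) = pscale (mus i) (arr n (Fw ((2 * n - (d + i + 1)) mod n)))"
    and "descends n phi dlt"
  shows "r = 2 \<and> (\<forall>i<n. mu i * mus i = 1)"
proof -
  interpret taft_reflection n d r m q phi dlt mu mus
    using assms by unfold_locales auto
  have "q = -1 \<and> (\<forall>i<n. mu i * mus i = 1)"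
    using q_eq_minus_1_and_mu_mus_eq_1 dlt_generator_nonzero_if_inner_faithful assms(1,2,9)
    by blast
  then show ?thesis using r_eq_2_if_q_eq_minus_1 by blast
qed

end
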